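(* Let $S_n(\mathbb{C})$ denote the set of complex symmetric $n\times n$ matrices and let $\Phi: S_n(\mathbb{C}) \to M_r(\mathbb{C})$ be a complex linear map preserving zero products (i.e. $\Phi(A)\Phi(B)=0$ whenever $A,B\in S_n(\mathbb{C})$ with $AB=0$). Then: (i) $\Phi(A)$ is an idempotent for every rank one idempotent $A$ in $S_n(\mathbb{R})$ if and only if there exist a nonnegative integer $k$ with $kn\le r$ and an invertible $S\in M_r(\mathbb{C})$ such that $\Phi(A) = S^{-1}\begin{pmatrix} I_k\otimes A & 0\\ 0 & 0_{r-kn}\end{pmatrix}S$ for all $A\in S_n(\mathbb{C})$; (ii) $\Phi(A)$ is a symmetric idempotent for every rank one idempotent $A$ in $S_n(\mathbb{R})$ if and only if the representation in (i) holds with $S$ complex orthogonal ($S^{-1}=S^{\mathrm t}$).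
   Context: $S_n(\mathbb{R})$ denotes the real symmetric $n\times n$ matrices; $I_k\otimes A$ denotes $A\oplus\cdots\oplus A$ ($k$ copies); $S^{\mathrm t}$ is the transpose. *)

theory Defs
  imports "Jordan_Normal_Form.DL_Rank"
begin

definition sym_mats :: "nat \<Rightarrow> complex mat set" where
  "sym_mats n = {A. A \<in> carrier_mat n n \<and> transpose_mat A = A}"

definition real_rank1_sym_idems :: "nat \<Rightarrow> real mat set" where
  "real_rank1_sym_idems n = {A. A \<in> carrier_mat n n \<and> transpose_mat A = A
      \<and> A * A = A \<and> vec_space.rank n A = 1}"

text \<open>The r x r block matrix diag(I_k \<otimes> A, 0_{r-kn}) for A an n x n matrix (needs k*n \<le> r).\<close>
definition block_embed :: "nat \<Rightarrow> nat \<Rightarrow> nat \<Rightarrow> complex mat \<Rightarrow> complex mat" where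
  "block_embed r k n A = mat r r (\<lambda>(i,j).
      if i < k * n \<and> j < k * n \<and> i div n = j div n then A $$ (i mod n, j mod n) else 0)"

end

theory Submission
  imports Defs
begin

text \<open>
  Write \<open>P\<^sub>a = \<Phi> E\<^sub>a\<^sub>a\<close> and \<open>G\<^sub>a\<^sub>b = \<Phi> (E\<^sub>a\<^sub>b + E\<^sub>b\<^sub>a)\<close>. The rank one idempotents
  \<open>(e\<^sub>a \<plusminus> e\<^sub>b)(e\<^sub>a \<plusminus> e\<^sub>b)\<^sup>T/2\<close> and \<open>(e\<^sub>a + e\<^sub>b + e\<^sub>c)(e\<^sub>a + e\<^sub>b + e\<^sub>c)\<^sup>T/3\<close>, together with
  a few zero products in \<open>S\<^sub>n\<close>, force the \<open>P\<^sub>a\<close> to be orthogonal idempotents and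
  \<open>T\<^sub>a\<^sub>a = P\<^sub>a\<close>, \<open>T\<^sub>a\<^sub>b = P\<^sub>a G\<^sub>a\<^sub>b\<close> to be a system of \<open>n \<times> n\<close> matrix units in \<open>M\<^sub>r(\<complex>)\<close>; by
  linearity \<open>\<Phi> A = \<Sum>\<^sub>a\<^sub>b A\<^sub>a\<^sub>b T\<^sub>a\<^sub>b\<close>. Factoring the idempotents \<open>T\<^sub>0\<^sub>0 = X Y\<close> with \<open>Y X = I\<^sub>k\<close>
  and \<open>I - \<Sum>\<^sub>a T\<^sub>a\<^sub>a = U V\<close> with \<open>V U = I\<^sub>m\<close> yields a basis of \<open>\<complex>\<^sup>r\<close>, the columns of
  \<open>T\<^sub>a\<^sub>0 X\<close> followed by those of \<open>U\<close>, in which every \<open>\<Phi> A\<close> is \<open>I\<^sub>k \<otimes> A \<oplus> 0\<close>; traces give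
  \<open>k n + m = r\<close>. If \<open>\<Phi>\<close> also yields symmetric matrices then \<open>T\<^sub>a\<^sub>b\<^sup>T = T\<^sub>b\<^sub>a\<close>, and since a complex
  symmetric idempotent factors as \<open>X X\<^sup>T\<close> with \<open>X\<^sup>T X = I\<close>, the basis can be chosen orthogonal.
\<close>

lemma index_mult_mat_sum:
  assumes "A \<in> carrier_mat nr n" "B \<in> carrier_mat n nc" "i < nr" "j < nc"
  shows "(A * B) $$ (i,j) = (\<Sum>l<n. A $$ (i,l) * B $$ (l,j))"
  using assms by (auto simp: scalar_prod_def lessThan_atLeast0 intro!: sum.cong)

lemma index_mult_mat_eqI:
  assumes "A \<in> carrier_mat na n" "B \<in> carrier_mat n nb" "R \<in> carrier_mat nr n" "C \<in> carrier_mat n nc"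
    and "l < na" "l' < nb" "p < nr" "q < nc"
    and rows: "\<And>i. i < n \<Longrightarrow> A $$ (l,i) = R $$ (p,i)" and cols: "\<And>i. i < n \<Longrightarrow> B $$ (i,l') = C $$ (i,q)"
  shows "(A * B) $$ (l,l') = (R * C) $$ (p,q)"
  unfolding index_mult_mat_sum[OF assms(1,2,5,6)] index_mult_mat_sum[OF assms(3,4,7,8)]
  by (intro sum.cong refl) (simp add: rows cols)

definition trace :: "'a::comm_monoid_add mat \<Rightarrow> 'a" where
  "trace A = (\<Sum>i<dim_row A. A $$ (i,i))"

lemma trace_comm:
  fixes X Y :: "'a::comm_semiring_0 mat"
  assumes X: "X \<in> carrier_mat a b" and Y: "Y \<in> carrier_mat b a"
  shows "trace (X * Y) = trace (Y * X)"
proof -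
  have "trace (X * Y) = (\<Sum>i<a. \<Sum>l<b. X $$ (i,l) * Y $$ (l,i))"
    unfolding trace_def using X Y by (simp del: index_mult_mat(1) add: index_mult_mat_sum[OF X Y])
  also have "\<dots> = (\<Sum>l<b. \<Sum>i<a. Y $$ (l,i) * X $$ (i,l))"
    by (subst sum.swap) (simp add: mult.commute)
  also have "\<dots> = trace (Y * X)"
    unfolding trace_def using X Y by (simp del: index_mult_mat(1) add: index_mult_mat_sum[OF Y X])
  finally show ?thesis .
qed

lemma trace_one_mat [simp]: "trace (1\<^sub>m k :: 'a::semiring_1 mat) = of_nat k"
  unfolding trace_def by simp

lemma trace_zero_mat [simp]: "trace (0\<^sub>m r r) = 0"
  unfolding trace_def by simp

lemma trace_minus:
  "A \<in> carrier_mat r r \<Longrightarrow> B \<in> carrier_mat r r \<Longrightarrow> trace (A - B) = trace A - trace (B :: 'a::ab_group_add mat)"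
  unfolding trace_def by (simp add: sum_subtractf)

lemma trace_idempotent_factor:
  fixes X Y :: "'a::comm_semiring_1 mat"
  assumes "X \<in> carrier_mat r k" "Y \<in> carrier_mat k r" "Y * X = 1\<^sub>m k"
  shows "trace (X * Y) = of_nat k"
  using trace_comm[OF assms(1,2)] assms(3) by simp

subsection \<open>Factoring idempotents\<close>

text \<open>Vectors of length \<open>r\<close> are functions on \<open>{..<r}\<close>; products such as \<open>N v\<close> are written as sums.\<close>

definition outer_mat :: "nat \<Rightarrow> (nat \<Rightarrow> 'a::times) \<Rightarrow> (nat \<Rightarrow> 'a) \<Rightarrow> 'a mat" where
  "outer_mat r v y = mat r r (\<lambda>(p,q). v p * y q)"

definition append_col :: "'a mat \<Rightarrow> (nat \<Rightarrow> 'a) \<Rightarrow> 'a mat" where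
  "append_col X v = mat (dim_row X) (Suc (dim_col X)) (\<lambda>(p,q). if q < dim_col X then X $$ (p,q) else v p)"

definition append_row :: "'a mat \<Rightarrow> (nat \<Rightarrow> 'a) \<Rightarrow> 'a mat" where
  "append_row Y y = mat (Suc (dim_row Y)) (dim_col Y) (\<lambda>(p,q). if p < dim_row Y then Y $$ (p,q) else y q)"

lemma outer_mat_carrier [simp]: "outer_mat r v y \<in> carrier_mat r r"
  and dim_outer_mat [simp]: "dim_row (outer_mat r v y) = r" "dim_col (outer_mat r v y) = r"
  and index_outer_mat [simp]: "p < r \<Longrightarrow> q < r \<Longrightarrow> outer_mat r v y $$ (p,q) = v p * y q"
  by (auto simp: outer_mat_def)

lemma append_col_carrier: "X \<in> carrier_mat r k \<Longrightarrow> append_col X v \<in> carrier_mat r (Suc k)"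
  by (auto simp: append_col_def)

lemma append_row_carrier: "Y \<in> carrier_mat k r \<Longrightarrow> append_row Y y \<in> carrier_mat (Suc k) r"
  by (auto simp: append_row_def)

lemma transpose_append_col: "transpose_mat (append_col X v) = append_row (transpose_mat X) v"
  by (auto simp: append_col_def append_row_def intro!: eq_matI)

lemma append_col_mult_append_row:
  fixes X Y :: "'a::comm_semiring_0 mat"
  assumes X: "X \<in> carrier_mat r k" and Y: "Y \<in> carrier_mat k r"
  shows "append_col X v * append_row Y y = X * Y + outer_mat r v y"
proof (rule eq_matI)
  fix i j assume "i < dim_row (X * Y + outer_mat r v y)" "j < dim_col (X * Y + outer_mat r v y)"
  hence ij: "i < r" "j < r" using X Y by auto
  have "(append_col X v * append_row Y y) $$ (i,j)
      = (\<Sum>l<Suc k. append_col X v $$ (i,l) * append_row Y y $$ (l,j))"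
    by (rule index_mult_mat_sum[OF append_col_carrier[OF X] append_row_carrier[OF Y] ij])
  also have "\<dots> = (\<Sum>l<k. X $$ (i,l) * Y $$ (l,j)) + v i * y j"
    using X Y ij by (simp add: append_col_def append_row_def)
  also have "\<dots> = (X * Y + outer_mat r v y) $$ (i,j)"
    using X Y ij by (simp add: index_mult_mat_sum[OF X Y ij])
  finally show "(append_col X v * append_row Y y) $$ (i,j) = (X * Y + outer_mat r v y) $$ (i,j)" .
qed (use X Y in \<open>auto simp: append_col_def append_row_def\<close>)

lemma append_row_mult_append_col:
  fixes X Y :: "'a::comm_semiring_1 mat"
  assumes X: "X \<in> carrier_mat r k" and Y: "Y \<in> carrier_mat k r" and YX: "Y * X = 1\<^sub>m k"
    and Yv: "\<And>p. p < k \<Longrightarrow> (\<Sum>l<r. Y $$ (p,l) * v l) = 0"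
    and yX: "\<And>q. q < k \<Longrightarrow> (\<Sum>l<r. y l * X $$ (l,q)) = 0"
    and yv: "(\<Sum>l<r. y l * v l) = 1"
  shows "append_row Y y * append_col X v = 1\<^sub>m (Suc k)"
proof (rule eq_matI)
  fix p q assume "p < dim_row (1\<^sub>m (Suc k) :: 'a mat)" "q < dim_col (1\<^sub>m (Suc k) :: 'a mat)"
  hence p: "p < Suc k" and q: "q < Suc k" by auto
  have "(append_row Y y * append_col X v) $$ (p,q)
      = (\<Sum>l<r. (if p < k then Y $$ (p,l) else y l) * (if q < k then X $$ (l,q) else v l))"
    using p q X Y
    by (simp add: index_mult_mat_sum[OF append_row_carrier[OF Y] append_col_carrier[OF X] p q])
       (auto simp: append_col_def append_row_def intro!: sum.cong)
  also have "\<dots> = 1\<^sub>m (Suc k) $$ (p,q)"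
  proof -
    consider "p < k" "q < k" | "p < k" "q = k" | "p = k" "q < k" | "p = k" "q = k"
      using p q by linarith
    thus ?thesis
    proof cases
      case 1
      thus ?thesis using arg_cong[OF YX, of "\<lambda>A. A $$ (p,q)"] index_mult_mat_sum[OF Y X, of p q] by simp
    qed (use Yv yX yv in simp_all)
  qed
  finally show "(append_row Y y * append_col X v) $$ (p,q) = 1\<^sub>m (Suc k) $$ (p,q)" .
qed (use X Y in \<open>auto simp: append_col_def append_row_def\<close>)

lemma idempotent_minus_outer_mat:
  fixes N :: "'a::comm_ring_1 mat"
  assumes N: "N \<in> carrier_mat r r" "N * N = N"
    and Nv: "\<And>p. p < r \<Longrightarrow> (\<Sum>l<r. N $$ (p,l) * v l) = v p"
    and yN: "\<And>q. q < r \<Longrightarrow> (\<Sum>l<r. y l * N $$ (l,q)) = y q"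
    and yv: "(\<Sum>l<r. y l * v l) = 1"
  shows "(N - outer_mat r v y) * (N - outer_mat r v y) = N - outer_mat r v y"
proof (rule eq_matI)
  fix p q assume "p < dim_row (N - outer_mat r v y)" "q < dim_col (N - outer_mat r v y)"
  hence p: "p < r" and q: "q < r" using N by auto
  have NN: "(\<Sum>l<r. N $$ (p,l) * N $$ (l,q)) = N $$ (p,q)"
    using arg_cong[OF N(2), of "\<lambda>A. A $$ (p,q)"] index_mult_mat_sum[OF N(1) N(1) p q] by simp
  have Nc: "N - outer_mat r v y \<in> carrier_mat r r" using N by (simp add: minus_carrier_mat)
  have "((N - outer_mat r v y) * (N - outer_mat r v y)) $$ (p,q)
      = (\<Sum>l<r. (N $$ (p,l) - v p * y l) * (N $$ (l,q) - v l * y q))"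
    using N p q by (simp add: index_mult_mat_sum[OF Nc Nc p q])
  also have "\<dots> = (\<Sum>l<r. N $$ (p,l) * N $$ (l,q)) - v p * (\<Sum>l<r. y l * N $$ (l,q))
         - (\<Sum>l<r. N $$ (p,l) * v l) * y q + v p * (\<Sum>l<r. y l * v l) * y q"
    by (simp add: algebra_simps sum_subtractf sum.distrib sum_distrib_left sum_distrib_right)
  also have "\<dots> = N $$ (p,q) - v p * y q"
    using NN Nv[OF p] yN[OF q] yv by simp
  finally show "((N - outer_mat r v y) * (N - outer_mat r v y)) $$ (p,q) = (N - outer_mat r v y) $$ (p,q)"
    using N p q by simp
qed (use N in auto)

lemma minus_outer_mat_mult_append_col:
  fixes N X :: "'a::comm_ring_1 mat"
  assumes X: "X \<in> carrier_mat r k" and N: "N \<in> carrier_mat r r" and NX: "N * X = 0\<^sub>m r k"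
    and Nv: "\<And>p. p < r \<Longrightarrow> (\<Sum>l<r. N $$ (p,l) * v l) = v p"
    and yX: "\<And>q. q < k \<Longrightarrow> (\<Sum>l<r. y l * X $$ (l,q)) = 0"
    and yv: "(\<Sum>l<r. y l * v l) = 1"
  shows "(N - outer_mat r v y) * append_col X v = 0\<^sub>m r (Suc k)"
proof (rule eq_matI)
  have N': "N - outer_mat r v y \<in> carrier_mat r r" using N by (simp add: minus_carrier_mat)
  have X': "append_col X v \<in> carrier_mat r (Suc k)" by (rule append_col_carrier[OF X])
  fix p q assume "p < dim_row (0\<^sub>m r (Suc k) :: 'a mat)" "q < dim_col (0\<^sub>m r (Suc k) :: 'a mat)"
  hence p: "p < r" and q: "q < Suc k" by auto
  have "((N - outer_mat r v y) * append_col X v) $$ (p,q)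
      = (\<Sum>l<r. N $$ (p,l) * append_col X v $$ (l,q)) - v p * (\<Sum>l<r. y l * append_col X v $$ (l,q))"
    using p q N by (simp add: index_mult_mat_sum[OF N' X' p q] algebra_simps sum_subtractf sum_distrib_left)
  also have "\<dots> = 0"
  proof (cases "q < k")
    case True
    thus ?thesis using index_mult_mat_sum[OF N X p True] NX p yX[OF True] X by (simp add: append_col_def)
  next
    case False
    hence "q = k" using q by simp
    thus ?thesis using Nv[OF p] yv X by (simp add: append_col_def)
  qed
  finally show "((N - outer_mat r v y) * append_col X v) $$ (p,q) = 0\<^sub>m r (Suc k) $$ (p,q)" using p q by simp
qed (use N X in \<open>auto simp: append_col_def\<close>)

lemma append_row_mult_minus_outer_mat:
  fixes N Y :: "'a::comm_ring_1 mat"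
  assumes Y: "Y \<in> carrier_mat k r" and N: "N \<in> carrier_mat r r" and YN: "Y * N = 0\<^sub>m k r"
    and yN: "\<And>q. q < r \<Longrightarrow> (\<Sum>l<r. y l * N $$ (l,q)) = y q"
    and Yv: "\<And>p. p < k \<Longrightarrow> (\<Sum>l<r. Y $$ (p,l) * v l) = 0"
    and yv: "(\<Sum>l<r. y l * v l) = 1"
  shows "append_row Y y * (N - outer_mat r v y) = 0\<^sub>m (Suc k) r"
proof (rule eq_matI)
  have N': "N - outer_mat r v y \<in> carrier_mat r r" using N by (simp add: minus_carrier_mat)
  have Y': "append_row Y y \<in> carrier_mat (Suc k) r" by (rule append_row_carrier[OF Y])
  fix p q assume "p < dim_row (0\<^sub>m (Suc k) r :: 'a mat)" "q < dim_col (0\<^sub>m (Suc k) r :: 'a mat)"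
  hence p: "p < Suc k" and q: "q < r" by auto
  have "(append_row Y y * (N - outer_mat r v y)) $$ (p,q)
      = (\<Sum>l<r. append_row Y y $$ (p,l) * N $$ (l,q)) - (\<Sum>l<r. append_row Y y $$ (p,l) * v l) * y q"
    using p q N by (simp add: index_mult_mat_sum[OF Y' N' p q] algebra_simps sum_subtractf
        sum_distrib_left sum_distrib_right)
  also have "\<dots> = 0"
  proof (cases "p < k")
    case True
    thus ?thesis using index_mult_mat_sum[OF Y N True q] YN q Yv[OF True] Y by (simp add: append_row_def)
  next
    case False
    hence "p = k" using p by simp
    thus ?thesis using yN[OF q] yv Y by (simp add: append_row_def)
  qed
  finally show "(append_row Y y * (N - outer_mat r v y)) $$ (p,q) = 0\<^sub>m (Suc k) r $$ (p,q)" using p q by simp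
qed (use N Y in \<open>auto simp: append_row_def\<close>)

text \<open>The rank one idempotent \<open>v y\<^sup>T\<close>, with \<open>v\<close> the \<open>j\<close>-th column and \<open>y\<^sup>T\<close> the \<open>i\<close>-th row of
  \<open>N\<close> divided by \<open>N\<^sub>i\<^sub>j\<close>, is moved from the remainder \<open>N\<close> into \<open>X Y\<close>.\<close>

lemma idempotent_sweep_step:
  fixes N :: "'a::field mat"
  assumes X: "X \<in> carrier_mat r k" and Y: "Y \<in> carrier_mat k r" and YX: "Y * X = 1\<^sub>m k"
    and N: "N \<in> carrier_mat r r" and NN: "N * N = N" and NX: "N * X = 0\<^sub>m r k" and YN: "Y * N = 0\<^sub>m k r"
    and ij: "i < r" "j < r" and Nij: "N $$ (i,j) \<noteq> 0"
  obtains X' Y' N' where "X' \<in> carrier_mat r (Suc k)" "Y' \<in> carrier_mat (Suc k) r" "Y' * X' = 1\<^sub>m (Suc k)"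
    "N' \<in> carrier_mat r r" "N' * N' = N'" "N' * X' = 0\<^sub>m r (Suc k)" "Y' * N' = 0\<^sub>m (Suc k) r"
    "X' * Y' + N' = X * Y + N" "\<And>p. p < r \<Longrightarrow> N' $$ (p,j) = 0"
    "\<And>p q. p < r \<Longrightarrow> q < r \<Longrightarrow> \<forall>p'<r. N $$ (p',q) = 0 \<Longrightarrow> N' $$ (p,q) = 0"
proof -
  define v where "v = (\<lambda>p. N $$ (p,j))"
  define y where "y = (\<lambda>q. N $$ (i,q) / N $$ (i,j))"
  have entry: "(\<Sum>l<r. A $$ (p,l) * B $$ (l,q)) = (A * B) $$ (p,q)"
    if "A \<in> carrier_mat a r" "B \<in> carrier_mat r b" "p < a" "q < b" for A B a b p q
    using index_mult_mat_sum[OF that] by simp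
  have Nv: "(\<Sum>l<r. N $$ (p,l) * v l) = v p" if "p < r" for p
    using entry[OF N N that ij(2)] NN by (simp add: v_def)
  have yN: "(\<Sum>l<r. y l * N $$ (l,q)) = y q" if "q < r" for q
    using entry[OF N N ij(1) that] NN by (simp add: y_def sum_divide_distrib[symmetric])
  have yv: "(\<Sum>l<r. y l * v l) = 1"
    using yN[OF ij(2)] Nij by (simp add: v_def y_def)
  have yX: "(\<Sum>l<r. y l * X $$ (l,q)) = 0" if "q < k" for q
    using entry[OF N X ij(1) that] NX ij(1) that by (simp add: y_def sum_divide_distrib[symmetric])
  have Yv: "(\<Sum>l<r. Y $$ (p,l) * v l) = 0" if "p < k" for p
    using entry[OF Y N that ij(2)] YN that ij(2) by (simp add: v_def)
  have N'e: "(N - outer_mat r v y) $$ (p,q) = N $$ (p,q) - v p * y q" if "p < r" "q < r" for p q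
    using that N by simp
  show thesis
  proof (rule that)
    show "append_col X v * append_row Y y + (N - outer_mat r v y) = X * Y + N"
      using append_col_mult_append_row[OF X Y, of v y] X Y N by (auto intro!: eq_matI)
    show "(N - outer_mat r v y) $$ (p,j) = 0" if "p < r" for p
      using N'e[OF that ij(2)] Nij by (simp add: v_def y_def)
    show "(N - outer_mat r v y) $$ (p,q) = 0" if "p < r" "q < r" "\<forall>p'<r. N $$ (p',q) = 0" for p q
      using N'e[OF that(1,2)] that ij(1) by (simp add: y_def)
  qed (use append_col_carrier[OF X] append_row_carrier[OF Y] N
      append_row_mult_append_col[OF X Y YX Yv yX yv] idempotent_minus_outer_mat[OF N NN Nv yN yv]
      minus_outer_mat_mult_append_col[OF X N NX Nv yX yv] append_row_mult_minus_outer_mat[OF Y N YN yN Yv yv]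
    in \<open>simp_all add: minus_carrier_mat\<close>)
qed

lemma idempotent_sweep:
  fixes M :: "'a::field mat"
  assumes M: "M \<in> carrier_mat r r" "M * M = M" and "j \<le> r"
  shows "\<exists>k X Y N. X \<in> carrier_mat r k \<and> Y \<in> carrier_mat k r \<and> Y * X = 1\<^sub>m k
     \<and> N \<in> carrier_mat r r \<and> N * N = N \<and> N * X = 0\<^sub>m r k \<and> Y * N = 0\<^sub>m k r \<and> M = X * Y + N
     \<and> (\<forall>p<r. \<forall>q<j. N $$ (p,q) = 0)"
  using \<open>j \<le> r\<close>
proof (induction j)
  case 0
  show ?case
    by (rule exI[of _ 0], rule exI[of _ "0\<^sub>m r 0"], rule exI[of _ "0\<^sub>m 0 r"], rule exI[of _ M])
       (use M in \<open>auto intro!: eq_matI\<close>)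
next
  case (Suc j)
  then obtain k X Y N where X: "X \<in> carrier_mat r k" and Y: "Y \<in> carrier_mat k r"
    and YX: "Y * X = 1\<^sub>m k" and N: "N \<in> carrier_mat r r" and NN: "N * N = N"
    and NX: "N * X = 0\<^sub>m r k" and YN: "Y * N = 0\<^sub>m k r" and MXY: "M = X * Y + N"
    and zero: "\<forall>p<r. \<forall>q<j. N $$ (p,q) = 0" by auto
  have j: "j < r" using Suc.prems by simp
  show ?case
  proof (cases "\<forall>p<r. N $$ (p,j) = 0")
    case True
    thus ?thesis using X Y YX N NN NX YN MXY zero
      by (intro exI[of _ k] exI[of _ X] exI[of _ Y] exI[of _ N]) (auto simp: less_Suc_eq)
  next
    case False
    then obtain i where i: "i < r" and Nij: "N $$ (i,j) \<noteq> 0" by auto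
    obtain X' Y' N' where X': "X' \<in> carrier_mat r (Suc k)" "Y' \<in> carrier_mat (Suc k) r"
      "Y' * X' = 1\<^sub>m (Suc k)" "N' \<in> carrier_mat r r" "N' * N' = N'" "N' * X' = 0\<^sub>m r (Suc k)"
      "Y' * N' = 0\<^sub>m (Suc k) r" "X' * Y' + N' = X * Y + N"
      and col_j: "\<And>p. p < r \<Longrightarrow> N' $$ (p,j) = 0"
      and cols: "\<And>p q. p < r \<Longrightarrow> q < r \<Longrightarrow> \<forall>p'<r. N $$ (p',q) = 0 \<Longrightarrow> N' $$ (p,q) = 0"
      by (rule idempotent_sweep_step[OF X Y YX N NN NX YN i j Nij]) blast
    have "\<forall>p<r. \<forall>q<Suc j. N' $$ (p,q) = 0"
      using col_j cols zero j by (auto simp: less_Suc_eq)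
    thus ?thesis using X' MXY by (intro exI[of _ "Suc k"] exI[of _ X'] exI[of _ Y'] exI[of _ N']) auto
  qed
qed

theorem idempotent_factorization:
  fixes M :: "'a::field mat"
  assumes M: "M \<in> carrier_mat r r" "M * M = M"
  obtains k X Y where "X \<in> carrier_mat r k" "Y \<in> carrier_mat k r" "Y * X = 1\<^sub>m k" "M = X * Y"
proof -
  obtain k X Y N where X: "X \<in> carrier_mat r k" and Y: "Y \<in> carrier_mat k r" and "Y * X = 1\<^sub>m k"
    and N: "N \<in> carrier_mat r r" and "M = X * Y + N" and "\<forall>p<r. \<forall>q<r. N $$ (p,q) = 0"
    using idempotent_sweep[OF M order.refl] by blast
  moreover have "N = 0\<^sub>m r r" using N \<open>\<forall>p<r. \<forall>q<r. N $$ (p,q) = 0\<close> by (auto intro!: eq_matI)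
  ultimately show thesis using that X Y by simp
qed

subsection \<open>Symmetric idempotents over \<open>\<complex>\<close>\<close>

lemma idempotent_trace_zero:
  fixes M :: "'a::{field,ring_char_0} mat"
  assumes M: "M \<in> carrier_mat r r" "M * M = M" and "trace M = 0"
  shows "M = 0\<^sub>m r r"
proof -
  obtain k X Y where X: "X \<in> carrier_mat r k" and Y: "Y \<in> carrier_mat k r" and "Y * X = 1\<^sub>m k"
    and MXY: "M = X * Y"
    by (rule idempotent_factorization[OF M])
  then have "k = 0" using trace_idempotent_factor[OF X Y] \<open>trace M = 0\<close> by simp
  thus ?thesis using MXY X Y by (auto intro!: eq_matI simp: index_mult_mat_sum[OF X Y])
qed

text \<open>The test vector is \<open>e\<^sub>j\<close> if some \<open>M\<^sub>j\<^sub>j \<noteq> 0\<close>, and otherwise \<open>e\<^sub>p + e\<^sub>q\<close> for some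
  \<open>M\<^sub>p\<^sub>q \<noteq> 0\<close> (polarization; needs \<open>2 \<noteq> 0\<close>).\<close>

lemma symmetric_mat_quadratic_form_nonzero:
  fixes M :: "'a::field_char_0 mat"
  assumes M: "M \<in> carrier_mat r r" "transpose_mat M = M" "M \<noteq> 0\<^sub>m r r"
  obtains x where "(\<Sum>p<r. x p * (\<Sum>q<r. M $$ (p,q) * x q)) \<noteq> 0"
proof -
  have sym: "M $$ (p,q) = M $$ (q,p)" if "p < r" "q < r" for p q
    using arg_cong[OF M(2), of "\<lambda>A. A $$ (q,p)"] that M(1) by auto
  define ind where "ind = (\<lambda>(K :: nat set) i. if i \<in> K then 1 else (0::'a))"
  have form: "(\<Sum>p<r. ind K p * (\<Sum>q<r. M $$ (p,q) * ind K q)) = (\<Sum>p\<in>K. \<Sum>q\<in>K. M $$ (p,q))"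
    if "K \<subseteq> {..<r}" for K
  proof -
    have fin: "finite K" using that finite_subset by blast
    have "(\<Sum>q<r. M $$ (p,q) * ind K q) = (\<Sum>q\<in>K. M $$ (p,q))" for p
      by (rule sum.mono_neutral_cong_right) (use that in \<open>auto simp: ind_def\<close>)
    moreover have "(\<Sum>p<r. ind K p * f p) = (\<Sum>p\<in>K. f p)" for f :: "nat \<Rightarrow> 'a"
      by (rule sum.mono_neutral_cong_right) (use that in \<open>auto simp: ind_def\<close>)
    ultimately show ?thesis by simp
  qed
  show thesis
  proof (cases "\<exists>j<r. M $$ (j,j) \<noteq> 0")
    case True
    then obtain j where "j < r" "M $$ (j,j) \<noteq> 0" by auto
    thus thesis using that[of "ind {j}"] form[of "{j}"] by simp
  next
    case False
    obtain p q where pq: "p < r" "q < r" "M $$ (p,q) \<noteq> 0"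
      using M by (metis eq_matI carrier_matD index_zero_mat(1,2,3))
    hence "p \<noteq> q" using False by auto
    hence "(\<Sum>a\<in>{p,q}. \<Sum>b\<in>{p,q}. M $$ (a,b)) = 2 * M $$ (p,q)"
      using False pq sym[of p q] by simp
    thus thesis using that[of "ind {p,q}"] form[of "{p,q}"] pq by simp
  qed
qed

text \<open>The vector is \<open>w = M x / sqrt (x\<^sup>T M x)\<close>, which is why complex square roots are needed.\<close>

lemma symmetric_idempotent_unit_fixed_vector:
  fixes M :: "complex mat"
  assumes M: "M \<in> carrier_mat r r" "M * M = M" "transpose_mat M = M" "M \<noteq> 0\<^sub>m r r"
  obtains w where "\<And>p. p < r \<Longrightarrow> (\<Sum>l<r. M $$ (p,l) * w l) = w p" "(\<Sum>l<r. w l * w l) = 1"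
proof -
  have sym: "M $$ (p,q) = M $$ (q,p)" if "p < r" "q < r" for p q
    using arg_cong[OF M(3), of "\<lambda>A. A $$ (q,p)"] that M(1) by auto
  have MM: "(\<Sum>l<r. M $$ (p,l) * M $$ (l,q)) = M $$ (p,q)" if "p < r" "q < r" for p q
    using arg_cong[OF M(2), of "\<lambda>A. A $$ (p,q)"] index_mult_mat_sum[OF M(1) M(1) that] by simp
  obtain x where x: "(\<Sum>p<r. x p * (\<Sum>q<r. M $$ (p,q) * x q)) \<noteq> 0"
    using symmetric_mat_quadratic_form_nonzero[OF M(1,3,4)] by blast
  define u where "u = (\<lambda>l. \<Sum>q<r. M $$ (l,q) * x q)"
  define s where "s = csqrt (\<Sum>p<r. x p * u p)"
  have s2: "s * s = (\<Sum>p<r. x p * u p)" by (simp add: s_def power2_eq_square[symmetric])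
  have xu: "(\<Sum>p<r. x p * u p) \<noteq> 0" using x by (simp add: u_def)
  have Mu: "(\<Sum>l<r. M $$ (p,l) * u l) = u p" if p: "p < r" for p
  proof -
    have "(\<Sum>l<r. M $$ (p,l) * u l) = (\<Sum>q<r. (\<Sum>l<r. M $$ (p,l) * M $$ (l,q)) * x q)"
      unfolding u_def by (simp add: sum_distrib_left sum_distrib_right mult.assoc) (rule sum.swap)
    also have "\<dots> = u p" unfolding u_def using MM[OF p] by simp
    finally show ?thesis .
  qed
  have uu: "(\<Sum>l<r. u l * u l) = (\<Sum>p<r. x p * u p)"
  proof -
    have "(\<Sum>l<r. u l * u l) = (\<Sum>l<r. \<Sum>q<r. x q * (M $$ (q,l) * u l))"
      unfolding u_def by (intro sum.cong refl) (auto simp: sum_distrib_right sym mult_ac)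
    also have "\<dots> = (\<Sum>q<r. x q * (\<Sum>l<r. M $$ (q,l) * u l))"
      by (subst sum.swap) (simp add: sum_distrib_left)
    finally show ?thesis by (simp add: Mu)
  qed
  show thesis
  proof (rule that[of "\<lambda>l. u l / s"])
    show "(\<Sum>l<r. M $$ (p,l) * (u l / s)) = u p / s" if "p < r" for p
      using Mu[OF that] by (simp add: sum_divide_distrib[symmetric])
    have "(\<Sum>l<r. u l / s * (u l / s)) = (\<Sum>l<r. u l * u l) / (s * s)"
      by (simp add: sum_divide_distrib)
    thus "(\<Sum>l<r. u l / s * (u l / s)) = 1" using uu s2 xu by simp
  qed
qed

lemma orthonormal_cols_orthogonal_to_kernel:
  fixes X :: "'a::comm_ring_1 mat"
  assumes X: "X \<in> carrier_mat r t" and XX: "transpose_mat X * X = 1\<^sub>m t" and q: "q < t"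
    and w: "\<And>p. p < r \<Longrightarrow> (\<Sum>l<r. (X * transpose_mat X) $$ (p,l) * w l) = 0"
  shows "(\<Sum>l<r. w l * X $$ (l,q)) = 0"
proof -
  define M where "M = X * transpose_mat X"
  have M: "M \<in> carrier_mat r r" using X by (simp add: M_def)
  have MX: "M * X = X" using X XX by (simp add: M_def assoc_mult_mat[of _ r t _ r _ t])
  have "transpose_mat M = M" using X by (simp add: M_def transpose_mult[of _ r t _ r])
  hence Msym: "M $$ (l,m) = M $$ (m,l)" if "l < r" "m < r" for l m
    using arg_cong[of _ _ "\<lambda>A. A $$ (l,m)"] that M by (metis carrier_matD index_transpose_mat(1))
  have col: "X $$ (l,q) = (\<Sum>m<r. M $$ (l,m) * X $$ (m,q))" if "l < r" for l
    using index_mult_mat_sum[OF M X that q] by (simp add: MX)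
  have "(\<Sum>l<r. w l * X $$ (l,q)) = (\<Sum>l<r. w l * (\<Sum>m<r. M $$ (l,m) * X $$ (m,q)))"
  proof (intro sum.cong refl)
    fix l assume "l \<in> {..<r}"
    thus "w l * X $$ (l,q) = w l * (\<Sum>m<r. M $$ (l,m) * X $$ (m,q))" using col[of l] by simp
  qed
  also have "\<dots> = (\<Sum>l<r. \<Sum>m<r. X $$ (m,q) * (M $$ (m,l) * w l))"
    by (intro sum.cong refl) (auto simp: sum_distrib_left Msym mult_ac)
  also have "\<dots> = (\<Sum>m<r. X $$ (m,q) * (\<Sum>l<r. M $$ (m,l) * w l))"
    by (subst sum.swap) (simp add: sum_distrib_left)
  finally show ?thesis using w by (simp add: M_def)
qed

theorem symmetric_idempotent_factorization:
  fixes M :: "complex mat"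
  assumes "M \<in> carrier_mat r r" "M * M = M" "transpose_mat M = M" "trace M = of_nat t"
  obtains X where "X \<in> carrier_mat r t" "transpose_mat X * X = 1\<^sub>m t" "X * transpose_mat X = M"
  using assms
proof (induction t arbitrary: M thesis)
  case 0
  hence "M = 0\<^sub>m r r" using idempotent_trace_zero[of M r] by simp
  moreover have "transpose_mat (0\<^sub>m r 0) * 0\<^sub>m r 0 = (1\<^sub>m 0 :: complex mat)" by (auto intro!: eq_matI)
  ultimately show ?case using "0.prems"(1)[of "0\<^sub>m r 0"] by auto
next
  case (Suc t M)
  have M: "M \<in> carrier_mat r r" and MM: "M * M = M" and Ms: "transpose_mat M = M"
    using Suc.prems by auto
  have sym: "M $$ (p,q) = M $$ (q,p)" if "p < r" "q < r" for p q
    using arg_cong[OF Ms, of "\<lambda>A. A $$ (q,p)"] that M by auto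
  have "M \<noteq> 0\<^sub>m r r" using Suc.prems(5) by (auto simp del: of_nat_Suc)
  then obtain w where Mw: "\<And>p. p < r \<Longrightarrow> (\<Sum>l<r. M $$ (p,l) * w l) = w p"
    and ww: "(\<Sum>l<r. w l * w l) = 1"
    using symmetric_idempotent_unit_fixed_vector[OF M MM Ms] by blast
  have wM: "(\<Sum>l<r. w l * M $$ (l,q)) = w q" if "q < r" for q
  proof -
    have "(\<Sum>l<r. w l * M $$ (l,q)) = (\<Sum>l<r. M $$ (q,l) * w l)"
      using that by (intro sum.cong) (auto simp: sym mult.commute)
    thus ?thesis using Mw[OF that] by simp
  qed
  define M' where "M' = M - outer_mat r w w"
  have M': "M' \<in> carrier_mat r r" using M by (simp add: M'_def minus_carrier_mat)
  have M'M': "M' * M' = M'"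
    unfolding M'_def by (rule idempotent_minus_outer_mat[OF M MM Mw wM ww])
  have M's: "transpose_mat M' = M'"
    using M sym by (auto intro!: eq_matI simp: M'_def mult.commute)
  have "trace M' = of_nat t"
    using Suc.prems(5) ww M by (simp add: M'_def trace_minus) (simp add: trace_def)
  then obtain X' where X': "X' \<in> carrier_mat r t" and X'X': "transpose_mat X' * X' = 1\<^sub>m t"
    and X'M': "X' * transpose_mat X' = M'"
    using Suc.IH[OF _ M' M'M' M's] by blast
  have M'w: "(\<Sum>l<r. M' $$ (p,l) * w l) = 0" if "p < r" for p
  proof -
    have "(\<Sum>l<r. M' $$ (p,l) * w l) = (\<Sum>l<r. M $$ (p,l) * w l) - w p * (\<Sum>l<r. w l * w l)"
      using that M by (simp add: M'_def left_diff_distrib sum_subtractf sum_distrib_left mult.assoc)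
    thus ?thesis using Mw[OF that] ww by simp
  qed
  have wX': "(\<Sum>l<r. w l * X' $$ (l,q)) = 0" if "q < t" for q
    by (rule orthonormal_cols_orthogonal_to_kernel[OF X' X'X' that]) (use M'w in \<open>simp add: X'M'\<close>)
  have X'w: "(\<Sum>l<r. transpose_mat X' $$ (p,l) * w l) = 0" if "p < t" for p
    using wX'[OF that] X' that by (simp add: mult.commute)
  define X where "X = append_col X' w"
  have "transpose_mat X * X = 1\<^sub>m (Suc t)"
    unfolding X_def transpose_append_col
    by (rule append_row_mult_append_col[OF X' _ X'X' X'w wX' ww]) (use X' in simp)
  moreover have "X * transpose_mat X = M"
    using append_col_mult_append_row[OF X', of "transpose_mat X'" w w] M X'
    by (auto simp: X_def transpose_append_col X'M' M'_def intro!: eq_matI)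
  ultimately show ?case using Suc.prems(1) append_col_carrier[OF X'] unfolding X_def by blast
qed

subsection \<open>Block embeddings\<close>

lemma sum_lessThan_add: fixes m p :: nat shows "(\<Sum>l<m + p. f l) = (\<Sum>l<m. f l) + (\<Sum>l<p. f (m + l))"
  by (induction p) (auto simp: add.assoc)

lemma sum_blocks: fixes k n :: nat shows "(\<Sum>l<k*n. f l) = (\<Sum>s<k. \<Sum>a<n. f (s*n + a))"
proof (induction k)
  case (Suc k)
  have "(\<Sum>l<Suc k * n. f l) = (\<Sum>l<k*n + n. f l)" by (simp add: add.commute)
  also have "\<dots> = (\<Sum>l<k*n. f l) + (\<Sum>a<n. f (k*n + a))" by (rule sum_lessThan_add)
  finally show ?case using Suc by simp
qed simp

lemma sum_lessThan_blocks: fixes k n m r :: nat shows "k*n + m = r \<Longrightarrow> (\<Sum>l<r. f l) = (\<Sum>s<k. \<Sum>a<n. f (s*n + a)) + (\<Sum>l<m. f (k*n + l))"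
  using sum_lessThan_add[of f "k*n" m] sum_blocks[of f k n] by auto

lemma block_index_div_mod: fixes n :: nat assumes "a < n" shows "(s*n+a) div n = s" "(s*n+a) mod n = a"
  using assms by auto

lemma block_index_less:
  fixes n :: nat assumes "s < k" "a < n" shows "s*n + a < k*n"
proof -
  have "s*n + a < Suc s * n" using assms(2) by simp
  also have "\<dots> \<le> k*n" using assms(1) by (intro mult_le_mono1) simp
  finally show ?thesis .
qed

lemma index_block_embed: "l < r \<Longrightarrow> l' < r \<Longrightarrow> block_embed r k n A $$ (l,l') =
   (if l < k*n \<and> l' < k*n \<and> l div n = l' div n then A$$(l mod n, l' mod n) else 0)"
  by (simp add: block_embed_def)

lemma block_embed_carrier[simp]: "block_embed r k n A \<in> carrier_mat r r"
  by (simp add: block_embed_def)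

lemma block_embed_mult:
  assumes A: "A \<in> carrier_mat n n" and C: "C \<in> carrier_mat n n" and kn: "k*n \<le> r"
  shows "block_embed r k n A * block_embed r k n C = block_embed r k n (A * C)"
proof (rule eq_matI)
  fix i j assume "i < dim_row (block_embed r k n (A * C))" "j < dim_col (block_embed r k n (A * C))"
  hence ij: "i < r" "j < r" by (auto simp: block_embed_def)
  have kn': "k*n + (r - k*n) = r" using kn by simp
  have "(block_embed r k n A * block_embed r k n C) $$ (i,j) = (\<Sum>l<r. block_embed r k n A $$ (i,l) * block_embed r k n C $$ (l,j))"
    by (rule index_mult_mat_sum[OF block_embed_carrier block_embed_carrier ij])
  also have "\<dots> = (\<Sum>s<k. \<Sum>c<n. block_embed r k n A $$ (i,s*n+c) * block_embed r k n C $$ (s*n+c,j))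
      + (\<Sum>l<r - k*n. block_embed r k n A $$ (i,k*n+l) * block_embed r k n C $$ (k*n+l,j))"
    by (rule sum_lessThan_blocks[OF kn'])
  also have "(\<Sum>l<r - k*n. block_embed r k n A $$ (i,k*n+l) * block_embed r k n C $$ (k*n+l,j)) = 0"
    using ij kn by (intro sum.neutral) (auto simp: index_block_embed)
  also have "(\<Sum>s<k. \<Sum>c<n. block_embed r k n A $$ (i,s*n+c) * block_embed r k n C $$ (s*n+c,j))
     = (\<Sum>s<k. \<Sum>c<n. if i < k*n \<and> j < k*n \<and> s = i div n \<and> s = j div n then A $$ (i mod n, c) * C $$ (c, j mod n) else 0)"
  proof (intro sum.cong refl)
    fix s c assume s: "s \<in> {..<k}" and c: "c \<in> {..<n}"
    have lt: "s*n+c < k*n" using s c by (simp add: block_index_less)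
    show "block_embed r k n A $$ (i,s*n+c) * block_embed r k n C $$ (s*n+c,j) =
      (if i < k*n \<and> j < k*n \<and> s = i div n \<and> s = j div n then A $$ (i mod n, c) * C $$ (c, j mod n) else 0)"
      using lt kn ij c by (auto simp: index_block_embed block_index_div_mod)
  qed
  also have "\<dots> = block_embed r k n (A * C) $$ (i,j)"
  proof (cases "i < k*n \<and> j < k*n \<and> i div n = j div n")
    case True
    have n_pos: "0 < n" using True by (cases n) auto
    have idk: "i div n < k" using True by (simp add: less_mult_imp_div_less)
    have "(\<Sum>s<k. \<Sum>c<n. if i < k*n \<and> j < k*n \<and> s = i div n \<and> s = j div n then A $$ (i mod n, c) * C $$ (c, j mod n) else 0)
       = (\<Sum>s<k. if s = i div n then (\<Sum>c<n. A $$ (i mod n, c) * C $$ (c, j mod n)) else 0)"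
      using True by (intro sum.cong refl) auto
    also have "\<dots> = (\<Sum>c<n. A $$ (i mod n, c) * C $$ (c, j mod n))" using idk by (simp add: sum.delta')
    also have "\<dots> = (A * C) $$ (i mod n, j mod n)"
      by (rule index_mult_mat_sum[OF A C, symmetric]) (use n_pos in auto)
    finally show ?thesis using True ij by (simp add: index_block_embed)
  next
    case False
    thus ?thesis using ij by (auto simp: index_block_embed intro!: sum.neutral)
  qed
  finally show "(block_embed r k n A * block_embed r k n C) $$ (i,j) = block_embed r k n (A * C) $$ (i,j)" by simp
qed (auto simp: block_embed_def)

lemma block_embed_transpose:
  assumes A: "A \<in> carrier_mat n n"
  shows "transpose_mat (block_embed r k n A) = block_embed r k n (transpose_mat A)"
proof (rule eq_matI)
  fix i j assume "i < dim_row (block_embed r k n (transpose_mat A))" "j < dim_col (block_embed r k n (transpose_mat A))"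
  hence ij: "i < r" "j < r" by (auto simp: block_embed_def)
  show "transpose_mat (block_embed r k n A) $$ (i,j) = block_embed r k n (transpose_mat A) $$ (i,j)"
  proof (cases "i < k*n \<and> j < k*n \<and> i div n = j div n")
    case True
    have n_pos: "0 < n" using True by (cases n) auto
    thus ?thesis using True ij A by (auto simp: block_embed_def)
  next
    case False
    thus ?thesis using ij by (auto simp: block_embed_def)
  qed
qed (auto simp: block_embed_def)

subsection \<open>Systems of matrix units\<close>

definition mat_sum :: "nat \<Rightarrow> 'i set \<Rightarrow> ('i \<Rightarrow> 'a::comm_monoid_add mat) \<Rightarrow> 'a mat" where
  "mat_sum r I f = mat r r (\<lambda>(i,j). \<Sum>a\<in>I. f a $$ (i,j))"

lemma mat_sum_cong: "(\<And>a. a \<in> I \<Longrightarrow> f a = g a) \<Longrightarrow> mat_sum r I f = mat_sum r I g"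
  unfolding mat_sum_def by (auto intro!: eq_matI sum.cong)

lemma mat_sum_carrier[simp]: "mat_sum r I f \<in> carrier_mat r r"
  by (simp add: mat_sum_def)
lemma mat_sum_dim[simp]: "dim_row (mat_sum r I f) = r" "dim_col (mat_sum r I f) = r"
  by (simp_all add: mat_sum_def)
lemma mat_sum_index[simp]: "i < r \<Longrightarrow> j < r \<Longrightarrow> mat_sum r I f $$ (i,j) = (\<Sum>a\<in>I. f a $$ (i,j))"
  by (simp add: mat_sum_def)

lemma mat_sum_mult_left:
  assumes A: "A \<in> carrier_mat r r" and f: "\<And>a. a \<in> I \<Longrightarrow> f a \<in> carrier_mat r r"
  shows "A * mat_sum r I f = mat_sum r I (\<lambda>a. A * f a)"
proof (rule eq_matI)
  fix i j assume "i < dim_row (mat_sum r I (\<lambda>a. A * f a))" "j < dim_col (mat_sum r I (\<lambda>a. A * f a))"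
  hence ij: "i < r" "j < r" by auto
  have "(A * mat_sum r I f)$$(i,j) = (\<Sum>l<r. A$$(i,l) * (\<Sum>a\<in>I. f a $$ (l,j)))"
    using index_mult_mat_sum[OF A mat_sum_carrier ij] ij by simp
  also have "\<dots> = (\<Sum>a\<in>I. \<Sum>l<r. A$$(i,l) * f a $$ (l,j))"
    by (simp add: sum_distrib_left) (rule sum.swap)
  also have "\<dots> = mat_sum r I (\<lambda>a. A * f a) $$ (i,j)"
    using ij f by (auto intro!: sum.cong simp: index_mult_mat_sum[OF A f])
  finally show "(A * mat_sum r I f)$$(i,j) = mat_sum r I (\<lambda>a. A * f a) $$ (i,j)" .
qed (use A in auto)

lemma mat_sum_mult_right:
  assumes A: "A \<in> carrier_mat r r" and f: "\<And>a. a \<in> I \<Longrightarrow> f a \<in> carrier_mat r r"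
  shows "mat_sum r I f * A = mat_sum r I (\<lambda>a. f a * A)"
proof (rule eq_matI)
  fix i j assume "i < dim_row (mat_sum r I (\<lambda>a. f a * A))" "j < dim_col (mat_sum r I (\<lambda>a. f a * A))"
  hence ij: "i < r" "j < r" by auto
  have "(mat_sum r I f * A)$$(i,j) = (\<Sum>l<r. (\<Sum>a\<in>I. f a $$ (i,l)) * A$$(l,j))"
    using index_mult_mat_sum[OF mat_sum_carrier A ij] ij by simp
  also have "\<dots> = (\<Sum>a\<in>I. \<Sum>l<r. f a $$ (i,l) * A$$(l,j))"
    by (simp add: sum_distrib_right) (rule sum.swap)
  also have "\<dots> = mat_sum r I (\<lambda>a. f a * A) $$ (i,j)"
    using ij f by (auto intro!: sum.cong simp: index_mult_mat_sum[OF f A])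
  finally show "(mat_sum r I f * A)$$(i,j) = mat_sum r I (\<lambda>a. f a * A) $$ (i,j)" .
qed (use A in auto)

lemma mat_sum_delta:
  assumes "finite I" "b \<in> I" "M \<in> carrier_mat r r"
  shows "mat_sum r I (\<lambda>c. if b = c then M else 0\<^sub>m r r) = M"
proof (rule eq_matI)
  fix i j assume "i < dim_row M" "j < dim_col M"
  hence ij: "i < r" "j < r" using assms by auto
  have "(\<Sum>a\<in>I. (if b = a then M else 0\<^sub>m r r) $$ (i,j)) = (\<Sum>a\<in>I. if b = a then M $$ (i,j) else 0)"
    using ij by (intro sum.cong) auto
  also have "\<dots> = M$$(i,j)" using assms by simp
  finally show "mat_sum r I (\<lambda>c. if b = c then M else 0\<^sub>m r r) $$ (i,j) = M$$(i,j)" using ij by simp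
qed (use assms in auto)

lemma trace_mat_sum: "(\<And>a. a \<in> I \<Longrightarrow> f a \<in> carrier_mat r r) \<Longrightarrow> trace (mat_sum r I f) = (\<Sum>a\<in>I. trace (f a))"
  unfolding trace_def by (simp add: sum.swap[of _ I]) (intro sum.cong, auto)

locale matrix_units =
  fixes n r :: nat and T :: "nat \<Rightarrow> nat \<Rightarrow> complex mat"
  assumes n_pos: "0 < n"
    and T_carrier: "\<And>a b. a < n \<Longrightarrow> b < n \<Longrightarrow> T a b \<in> carrier_mat r r"
    and T_mult: "\<And>a b c d. a < n \<Longrightarrow> b < n \<Longrightarrow> c < n \<Longrightarrow> d < n \<Longrightarrow>
               T a b * T c d = (if b = c then T a d else 0\<^sub>m r r)"
begin

definition P :: "complex mat" where "P = mat_sum r {..<n} (\<lambda>a. T a a)"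

lemma P_carrier: "P \<in> carrier_mat r r" by (simp add: P_def)

lemma T_mult_P: assumes ab: "a < n" "b < n" shows "T a b * P = T a b"
proof -
  have "T a b * P = mat_sum r {..<n} (\<lambda>c. T a b * T c c)"
    unfolding P_def by (rule mat_sum_mult_left[OF T_carrier[OF ab]]) (auto intro: T_carrier)
  also have "\<dots> = mat_sum r {..<n} (\<lambda>c. if b = c then T a b else 0\<^sub>m r r)"
    using ab by (intro mat_sum_cong) (simp add: T_mult)
  also have "\<dots> = T a b" using ab by (intro mat_sum_delta) (auto intro: T_carrier)
  finally show ?thesis .
qed

lemma P_mult_T: assumes ab: "a < n" "b < n" shows "P * T a b = T a b"
proof -
  have "P * T a b = mat_sum r {..<n} (\<lambda>c. T c c * T a b)"
    unfolding P_def by (rule mat_sum_mult_right[OF T_carrier[OF ab]]) (auto intro: T_carrier)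
  also have "\<dots> = mat_sum r {..<n} (\<lambda>c. if a = c then T a b else 0\<^sub>m r r)"
    using ab by (intro mat_sum_cong) (auto simp: T_mult)
  also have "\<dots> = T a b" using ab by (intro mat_sum_delta) (auto intro: T_carrier)
  finally show ?thesis .
qed

lemma P_idempotent: "P * P = P"
proof -
  have "P * P = mat_sum r {..<n} (\<lambda>c. P * T c c)"
    by (subst (2) P_def) (rule mat_sum_mult_left[OF P_carrier], auto intro: T_carrier)
  also have "\<dots> = mat_sum r {..<n} (\<lambda>c. T c c)" by (intro mat_sum_cong) (simp add: P_mult_T)
  finally show ?thesis unfolding P_def .
qed

definition Q :: "complex mat" where "Q = 1\<^sub>m r - P"

lemma Q_carrier: "Q \<in> carrier_mat r r" by (simp add: Q_def P_carrier minus_carrier_mat)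

lemma Q_idempotent: "Q * Q = Q"
proof -
  have "Q * Q = Q * 1\<^sub>m r - Q * P" by (subst (2) Q_def) (rule mult_minus_distrib_mat[OF Q_carrier _ P_carrier], simp)
  moreover have "Q * P = 0\<^sub>m r r"
    unfolding Q_def using P_carrier by (subst minus_mult_distrib_mat[of _ r r _ _ r]) (auto simp: P_idempotent left_mult_one_mat)
  ultimately show ?thesis using Q_carrier by (auto intro!: eq_matI)
qed

lemma T_mult_Q: assumes "a < n" "b < n" shows "T a b * Q = 0\<^sub>m r r"
proof -
  have "T a b * Q = T a b * 1\<^sub>m r - T a b * P" unfolding Q_def
    by (rule mult_minus_distrib_mat[OF T_carrier[OF assms] _ P_carrier]) simp
  thus ?thesis using T_carrier[OF assms] T_mult_P[OF assms] by simp
qed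

lemma Q_mult_T: assumes "a < n" "b < n" shows "Q * T a b = 0\<^sub>m r r"
proof -
  have "Q * T a b = 1\<^sub>m r * T a b - P * T a b" unfolding Q_def
    by (rule minus_mult_distrib_mat[OF _ P_carrier T_carrier[OF assms]]) simp
  thus ?thesis using T_carrier[OF assms] P_mult_T[OF assms] by simp
qed

lemma trace_units_sum: "trace (T 0 0) = of_nat k \<Longrightarrow> trace P = of_nat (n * k)"
proof -
  assume k: "trace (T 0 0) = of_nat k"
  have "trace P = (\<Sum>a<n. trace (T a a))" unfolding P_def by (rule trace_mat_sum) (auto intro: T_carrier)
  also have "\<dots> = (\<Sum>a<n. trace (T 0 0))"
  proof (intro sum.cong refl)
    fix a assume "a \<in> {..<n}"
    hence a: "a < n" by simp
    have "trace (T a a) = trace (T a 0 * T 0 a)" using T_mult[OF a n_pos n_pos a] by simp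
    also have "\<dots> = trace (T 0 a * T a 0)" by (rule trace_comm[OF T_carrier T_carrier]) (use a n_pos in auto)
    also have "\<dots> = trace (T 0 0)" using T_mult[OF n_pos a a n_pos] by simp
    finally show "trace (T a a) = trace (T 0 0)" .
  qed
  finally show ?thesis using k by simp
qed

definition expand :: "complex mat \<Rightarrow> complex mat" where
  "expand A = mat r r (\<lambda>(i,j). \<Sum>a<n. \<Sum>b<n. A $$ (a,b) * T a b $$ (i,j))"

lemma index_expand: "i < r \<Longrightarrow> j < r \<Longrightarrow> expand A $$ (i,j) = (\<Sum>a<n. \<Sum>b<n. A $$ (a,b) * T a b $$ (i,j))"
  by (simp add: expand_def)

lemma expand_add: "A \<in> carrier_mat n n \<Longrightarrow> B \<in> carrier_mat n n \<Longrightarrow> expand (A + B) = expand A + expand B"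
  by (auto intro!: eq_matI simp: expand_def algebra_simps sum.distrib)

lemma expand_smult: "A \<in> carrier_mat n n \<Longrightarrow> expand (c \<cdot>\<^sub>m A) = c \<cdot>\<^sub>m expand A"
  by (auto intro!: eq_matI simp: expand_def sum_distrib_left mult.assoc)

lemma expand_zero: "expand (0\<^sub>m n n) = 0\<^sub>m r r"
  by (auto intro!: eq_matI simp: expand_def)

lemma block_index_bounds:
  assumes "l < k*n"
  shows "l div n < k" "l mod n < n"
  using assms n_pos by (auto simp: less_mult_imp_div_less)

end

locale matrix_units_factorization = matrix_units +
  fixes k m :: nat and X Y U V :: "complex mat"
  assumes X: "X \<in> carrier_mat r k" and Y: "Y \<in> carrier_mat k r" and YX: "Y*X = 1\<^sub>m k"
    and XY: "X*Y = T 0 0" and U: "U \<in> carrier_mat r m" and V: "V \<in> carrier_mat m r"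
    and VU: "V*U = 1\<^sub>m m" and UV: "U*V = Q" and rkm: "k*n + m = r"
begin

text \<open>Column \<open>s n + a\<close> of the adapted basis is \<open>T\<^sub>a\<^sub>0 X e\<^sub>s\<close>; the last \<open>m\<close> columns
  are those of \<open>U\<close>, spanning the range of \<open>Q\<close>.\<close>

definition adapted_basis :: "complex mat" where
  "adapted_basis = mat r r (\<lambda>(i,l). if l < k*n then (T (l mod n) 0 * X) $$ (i, l div n) else U $$ (i, l - k*n))"

definition adapted_cobasis :: "complex mat" where
  "adapted_cobasis = mat r r (\<lambda>(l,j). if l < k*n then (Y * T 0 (l mod n)) $$ (l div n, j) else V $$ (l - k*n, j))"

lemma units_X_carrier: "a < n \<Longrightarrow> T a 0 * X \<in> carrier_mat r k" using T_carrier[of a 0] n_pos X by auto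
lemma Y_units_carrier: "a < n \<Longrightarrow> Y * T 0 a \<in> carrier_mat k r" using T_carrier[of 0 a] n_pos Y by auto

lemma units_X_Y_units: assumes a: "a < n" and b: "b < n" shows "(T a 0 * X) * (Y * T 0 b) = T a b"
proof -
  have "(T a 0 * X) * (Y * T 0 b) = T a 0 * (X * (Y * T 0 b))"
    using T_carrier[OF a n_pos] T_carrier[OF n_pos b] X Y by (subst assoc_mult_mat[of _ r r _ k _ r]) auto
  also have "\<dots> = T a 0 * ((X * Y) * T 0 b)"
    using T_carrier[OF a n_pos] T_carrier[OF n_pos b] X Y by (subst assoc_mult_mat[of _ r k _ r _ r]) auto
  also have "\<dots> = T a b" unfolding XY using T_mult a b n_pos by simp
  finally show ?thesis .
qed

lemma Y_units_units_X: assumes a: "a < n" and b: "b < n"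
  shows "(Y * T 0 a) * (T b 0 * X) = (if a = b then 1\<^sub>m k else 0\<^sub>m k k)"
proof -
  have "(Y * T 0 a) * (T b 0 * X) = Y * (T 0 a * (T b 0 * X))"
    using T_carrier[OF n_pos a] T_carrier[OF b n_pos] X Y by (subst assoc_mult_mat[of _ k r _ r _ k]) auto
  also have "\<dots> = Y * ((T 0 a * T b 0) * X)"
    using T_carrier[OF n_pos a] T_carrier[OF b n_pos] X by (subst assoc_mult_mat[of _ r r _ r _ k]) auto
  also have "\<dots> = (if a = b then 1\<^sub>m k else 0\<^sub>m k k)"
  proof (cases "a = b")
    case True
    have "Y * ((X*Y) * X) = Y * (X * (Y * X))"
      using X Y by (subst assoc_mult_mat[of X r k Y r X k]) auto
    also have "\<dots> = (Y * X) * (Y * X)"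
      using X Y by (subst assoc_mult_mat[of Y k r X k "Y*X" k]) auto
    finally have "Y * ((X*Y) * X) = (Y * X) * (Y * X)" .
    thus ?thesis using True T_mult[OF n_pos a b n_pos] YX XY by simp
  next
    case False
    thus ?thesis using T_mult[OF n_pos a b n_pos] X Y by simp
  qed
  finally show ?thesis .
qed

lemma Y_units_U: assumes a: "a < n" shows "(Y * T 0 a) * U = 0\<^sub>m k m"
proof -
  have "U = Q * U" using U V by (simp add: UV[symmetric] assoc_mult_mat[of _ r m _ r _ m] VU)
  hence "(Y * T 0 a) * U = Y * ((T 0 a * Q) * U)"
    using T_carrier[OF n_pos a] Y U Q_carrier by (simp add: assoc_mult_mat[of _ k r _ r _ m] assoc_mult_mat[of _ r r _ r _ m])
  thus ?thesis using T_mult_Q[OF n_pos a] Y U by simp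
qed

lemma V_units_X: assumes a: "a < n" shows "V * (T a 0 * X) = 0\<^sub>m m k"
proof -
  have "V = V * Q" using U V by (simp add: UV[symmetric] assoc_mult_mat[of _ m r _ m _ r, symmetric] VU)
  hence "V * (T a 0 * X) = (V * Q) * (T a 0 * X)" by simp
  also have "\<dots> = V * ((Q * T a 0) * X)"
    using T_carrier[OF a n_pos] V X Q_carrier by (simp add: assoc_mult_mat[of _ m r _ r _ k] assoc_mult_mat[of _ r r _ r _ k])
  finally have "V * (T a 0 * X) = V * ((Q * T a 0) * X)" .
  thus ?thesis using Q_mult_T[OF a n_pos] V X by simp
qed

lemma adapted_basis_carrier: "adapted_basis \<in> carrier_mat r r" by (simp add: adapted_basis_def)
lemma adapted_cobasis_carrier: "adapted_cobasis \<in> carrier_mat r r" by (simp add: adapted_cobasis_def)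

lemma adapted_basis_index: "i < r \<Longrightarrow> l < r \<Longrightarrow> adapted_basis $$ (i,l) =
   (if l < k*n then (T (l mod n) 0 * X)$$(i, l div n) else U$$(i, l - k*n))"
  by (simp add: adapted_basis_def)
lemma adapted_cobasis_index: "l < r \<Longrightarrow> j < r \<Longrightarrow> adapted_cobasis $$ (l,j) =
   (if l < k*n then (Y * T 0 (l mod n))$$(l div n, j) else V$$(l - k*n, j))"
  by (simp add: adapted_cobasis_def)

lemma adapted_cobasis_mult_adapted_basis: "adapted_cobasis * adapted_basis = 1\<^sub>m r"
proof (rule eq_matI)
  fix l l' assume "l < dim_row (1\<^sub>m r :: complex mat)" "l' < dim_col (1\<^sub>m r :: complex mat)"
  hence l: "l < r" and l': "l' < r" by auto
  note eqI = index_mult_mat_eqI[OF adapted_cobasis_carrier adapted_basis_carrier _ _ l l']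
  note index = adapted_cobasis_index adapted_basis_index
  have same: "l = l' \<longleftrightarrow> l mod n = l' mod n \<and> l div n = l' div n" by (metis div_mult_mod_eq)
  consider (blocks) "l < k*n" "l' < k*n" | (block_rest) "l < k*n" "\<not> l' < k*n"
    | (rest_block) "\<not> l < k*n" "l' < k*n" | (rest_rest) "\<not> l < k*n" "\<not> l' < k*n" by blast
  thus "(adapted_cobasis * adapted_basis) $$ (l,l') = 1\<^sub>m r $$ (l,l')"
  proof cases
    case blocks
    note bounds = block_index_bounds[OF blocks(1)] block_index_bounds[OF blocks(2)]
    have "(adapted_cobasis * adapted_basis) $$ (l,l')
        = ((Y * T 0 (l mod n)) * (T (l' mod n) 0 * X)) $$ (l div n, l' div n)"
      by (rule eqI[OF Y_units_carrier units_X_carrier]) (use bounds blocks l l' in \<open>simp_all add: index\<close>)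
    thus ?thesis using bounds l l' same by (simp add: Y_units_units_X)
  next
    case block_rest
    note bounds = block_index_bounds[OF block_rest(1)]
    have "(adapted_cobasis * adapted_basis) $$ (l,l') = ((Y * T 0 (l mod n)) * U) $$ (l div n, l' - k*n)"
      by (rule eqI[OF Y_units_carrier U]) (use bounds block_rest l l' rkm in \<open>simp_all add: index\<close>)
    thus ?thesis using Y_units_U bounds block_rest l l' rkm by auto
  next
    case rest_block
    note bounds = block_index_bounds[OF rest_block(2)]
    have "(adapted_cobasis * adapted_basis) $$ (l,l') = (V * (T (l' mod n) 0 * X)) $$ (l - k*n, l' div n)"
      by (rule eqI[OF V units_X_carrier]) (use bounds rest_block l l' rkm in \<open>simp_all add: index\<close>)
    thus ?thesis using V_units_X bounds rest_block l l' rkm by auto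
  next
    case rest_rest
    have "(adapted_cobasis * adapted_basis) $$ (l,l') = (V * U) $$ (l - k*n, l' - k*n)"
      by (rule eqI[OF V U]) (use rest_rest l l' rkm in \<open>simp_all add: index\<close>)
    thus ?thesis using rest_rest l l' rkm VU by auto
  qed
qed (auto simp: adapted_cobasis_def adapted_basis_def)

lemma adapted_basis_mult_adapted_cobasis: "adapted_basis * adapted_cobasis = 1\<^sub>m r"
proof (rule eq_matI)
  fix i j assume "i < dim_row (1\<^sub>m r :: complex mat)" "j < dim_col (1\<^sub>m r :: complex mat)"
  hence i: "i < r" and j: "j < r" by auto
  have "(adapted_basis * adapted_cobasis) $$ (i,j) = (\<Sum>l<r. adapted_basis $$ (i,l) * adapted_cobasis $$ (l,j))"
    by (rule index_mult_mat_sum[OF adapted_basis_carrier adapted_cobasis_carrier i j])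
  also have "\<dots> = (\<Sum>s<k. \<Sum>a<n. adapted_basis $$ (i,s*n+a) * adapted_cobasis $$ (s*n+a,j))
       + (\<Sum>l<m. adapted_basis $$ (i,k*n+l) * adapted_cobasis $$ (k*n+l,j))"
    by (rule sum_lessThan_blocks[OF rkm])
  also have "(\<Sum>s<k. \<Sum>a<n. adapted_basis $$ (i,s*n+a) * adapted_cobasis $$ (s*n+a,j))
       = (\<Sum>s<k. \<Sum>a<n. (T a 0 * X)$$(i,s) * (Y * T 0 a)$$(s,j))"
  proof (intro sum.cong refl)
    fix s a assume s: "s \<in> {..<k}" and a: "a \<in> {..<n}"
    have lt: "s*n+a < k*n" using s a by (simp add: block_index_less)
    show "adapted_basis $$ (i,s*n+a) * adapted_cobasis $$ (s*n+a,j) = (T a 0 * X)$$(i,s) * (Y * T 0 a)$$(s,j)"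
      using lt rkm i j a by (simp add: adapted_basis_index adapted_cobasis_index block_index_div_mod)
  qed
  also have "\<dots> = (\<Sum>a<n. ((T a 0 * X) * (Y * T 0 a))$$(i,j))"
    by (subst sum.swap) (intro sum.cong refl, rule index_mult_mat_sum[OF units_X_carrier Y_units_carrier i j, symmetric], auto)
  also have "\<dots> = P $$ (i,j)" using i j by (simp add: units_X_Y_units P_def)
  also have "(\<Sum>l<m. adapted_basis $$ (i,k*n+l) * adapted_cobasis $$ (k*n+l,j)) = (\<Sum>l<m. U$$(i,l) * V$$(l,j))"
    using i j rkm by (intro sum.cong refl) (simp add: adapted_basis_index adapted_cobasis_index)
  also have "\<dots> = Q $$ (i,j)" using index_mult_mat_sum[OF U V i j] UV by simp
  finally show "(adapted_basis * adapted_cobasis) $$ (i,j) = 1\<^sub>m r $$ (i,j)"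
    using i j P_carrier by (simp add: Q_def)
qed (auto simp: adapted_cobasis_def adapted_basis_def)

lemma index_adapted_basis_mult_block_embed:
  assumes i: "i < r" and l': "l' < r"
  shows "(adapted_basis * block_embed r k n A) $$ (i,l')
    = (if l' < k*n then (\<Sum>a<n. (T a 0 * X) $$ (i, l' div n) * A $$ (a, l' mod n)) else 0)"
proof -
  define B where "B = block_embed r k n A"
  have B: "B \<in> carrier_mat r r" by (simp add: B_def)
  have "(adapted_basis * B) $$ (i,l') = (\<Sum>l<r. adapted_basis $$ (i,l) * B $$ (l,l'))"
    by (rule index_mult_mat_sum[OF adapted_basis_carrier B i l'])
  also have "\<dots> = (\<Sum>s<k. \<Sum>a<n. adapted_basis $$ (i,s*n+a) * B $$ (s*n+a,l'))
     + (\<Sum>l<m. adapted_basis $$ (i,k*n+l) * B $$ (k*n+l,l'))"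
    by (rule sum_lessThan_blocks[OF rkm])
  also have "(\<Sum>l<m. adapted_basis $$ (i,k*n+l) * B $$ (k*n+l,l')) = 0"
    using rkm l' by (intro sum.neutral) (auto simp: B_def index_block_embed)
  also have "(\<Sum>s<k. \<Sum>a<n. adapted_basis $$ (i,s*n+a) * B $$ (s*n+a,l'))
     = (\<Sum>s<k. \<Sum>a<n. if l' < k*n \<and> s = l' div n then (T a 0 * X)$$(i,s) * A$$(a, l' mod n) else 0)"
  proof (intro sum.cong refl)
    fix s a assume s: "s \<in> {..<k}" and a: "a \<in> {..<n}"
    have lt: "s*n+a < k*n" using s a by (simp add: block_index_less)
    show "adapted_basis $$ (i,s*n+a) * B $$ (s*n+a,l') = (if l' < k*n \<and> s = l' div n then (T a 0 * X)$$(i,s) * A$$(a, l' mod n) else 0)"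
      using lt rkm i l' a by (auto simp: adapted_basis_index B_def index_block_embed block_index_div_mod)
  qed
  also have "\<dots> = (if l' < k*n then (\<Sum>a<n. (T a 0 * X)$$(i, l' div n) * A$$(a, l' mod n)) else 0)"
  proof (cases "l' < k*n")
    case True
    have "(\<Sum>s<k. \<Sum>a<n. if l' < k*n \<and> s = l' div n then (T a 0 * X)$$(i,s) * A$$(a, l' mod n) else 0)
        = (\<Sum>s<k. if s = l' div n then (\<Sum>a<n. (T a 0 * X)$$(i,s) * A$$(a, l' mod n)) else 0)"
      using True by (intro sum.cong refl) auto
    also have "\<dots> = (\<Sum>a<n. (T a 0 * X)$$(i, l' div n) * A$$(a, l' mod n))"
      using block_index_bounds[OF True] by (simp add: sum.delta')
    finally show ?thesis using True by simp
  qed simp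
  finally show ?thesis by (simp add: B_def)
qed

lemma adapted_basis_block_embed:
  assumes A: "A \<in> carrier_mat n n"
  shows "adapted_basis * block_embed r k n A * adapted_cobasis = expand A"
proof -
  define B where "B = block_embed r k n A"
  have B: "B \<in> carrier_mat r r" by (simp add: B_def)
  note SB = index_adapted_basis_mult_block_embed[of _ _ A, folded B_def]
  show ?thesis
  proof (rule eq_matI)
    fix i j assume "i < dim_row (expand A)" "j < dim_col (expand A)"
    hence i: "i < r" and j: "j < r" by (auto simp: expand_def)
    have SBc: "adapted_basis * B \<in> carrier_mat r r" using adapted_basis_carrier B by simp
    have "(adapted_basis * B * adapted_cobasis) $$ (i,j) = (\<Sum>l<r. (adapted_basis * B) $$ (i,l) * adapted_cobasis $$ (l,j))"
      by (rule index_mult_mat_sum[OF SBc adapted_cobasis_carrier i j])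
    also have "\<dots> = (\<Sum>s<k. \<Sum>b<n. (adapted_basis * B) $$ (i,s*n+b) * adapted_cobasis $$ (s*n+b,j))
       + (\<Sum>l<m. (adapted_basis * B) $$ (i,k*n+l) * adapted_cobasis $$ (k*n+l,j))"
      by (rule sum_lessThan_blocks[OF rkm])
    also have "(\<Sum>l<m. (adapted_basis * B) $$ (i,k*n+l) * adapted_cobasis $$ (k*n+l,j)) = 0"
      using rkm i by (intro sum.neutral) (auto simp: SB)
    also have "(\<Sum>s<k. \<Sum>b<n. (adapted_basis * B) $$ (i,s*n+b) * adapted_cobasis $$ (s*n+b,j))
       = (\<Sum>s<k. \<Sum>b<n. (\<Sum>a<n. (T a 0 * X)$$(i, s) * A$$(a, b)) * (Y * T 0 b)$$(s,j))"
    proof (intro sum.cong refl)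
      fix s b assume s: "s \<in> {..<k}" and b: "b \<in> {..<n}"
      have lt: "s*n+b < k*n" using s b by (simp add: block_index_less)
      show "(adapted_basis * B) $$ (i,s*n+b) * adapted_cobasis $$ (s*n+b,j) = (\<Sum>a<n. (T a 0 * X)$$(i, s) * A$$(a, b)) * (Y * T 0 b)$$(s,j)"
        using lt rkm i j b by (simp add: SB adapted_cobasis_index block_index_div_mod)
    qed
    also have "\<dots> = (\<Sum>a<n. \<Sum>b<n. A$$(a,b) * (\<Sum>s<k. (T a 0 * X)$$(i, s) * (Y * T 0 b)$$(s,j)))"
    proof -
      define t where "t = (\<lambda>a b s. A$$(a,b) * ((T a 0 * X)$$(i, s) * (Y * T 0 b)$$(s,j)))"
      have "(\<Sum>s<k. \<Sum>b<n. (\<Sum>a<n. (T a 0 * X)$$(i, s) * A$$(a, b)) * (Y * T 0 b)$$(s,j))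
          = (\<Sum>s<k. \<Sum>b<n. \<Sum>a<n. t a b s)"
        unfolding t_def by (simp add: sum_distrib_right sum_distrib_left mult_ac)
      also have "\<dots> = (\<Sum>b<n. \<Sum>s<k. \<Sum>a<n. t a b s)" by (rule sum.swap)
      also have "\<dots> = (\<Sum>b<n. \<Sum>a<n. \<Sum>s<k. t a b s)" by (rule sum.cong[OF refl], rule sum.swap)
      also have "\<dots> = (\<Sum>a<n. \<Sum>b<n. \<Sum>s<k. t a b s)" by (rule sum.swap)
      also have "\<dots> = (\<Sum>a<n. \<Sum>b<n. A$$(a,b) * (\<Sum>s<k. (T a 0 * X)$$(i, s) * (Y * T 0 b)$$(s,j)))"
        unfolding t_def by (simp add: sum_distrib_left)
      finally show ?thesis .
    qed
    also have "\<dots> = (\<Sum>a<n. \<Sum>b<n. A$$(a,b) * T a b $$ (i,j))"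
    proof (intro sum.cong refl)
      fix a b assume a: "a \<in> {..<n}" and b: "b \<in> {..<n}"
      have "(\<Sum>s<k. (T a 0 * X)$$(i, s) * (Y * T 0 b)$$(s,j)) = ((T a 0 * X) * (Y * T 0 b))$$(i,j)"
        by (rule index_mult_mat_sum[OF units_X_carrier Y_units_carrier i j, symmetric]) (use a b in auto)
      thus "A$$(a,b) * (\<Sum>s<k. (T a 0 * X)$$(i, s) * (Y * T 0 b)$$(s,j)) = A$$(a,b) * T a b $$ (i,j)"
        using a b by (simp add: units_X_Y_units)
    qed
    also have "\<dots> = expand A $$ (i,j)" using i j by (simp add: expand_def)
    finally show "(adapted_basis * block_embed r k n A * adapted_cobasis) $$ (i,j) = expand A $$ (i,j)"
      unfolding B_def by simp
  qed (auto simp: expand_def adapted_basis_def adapted_cobasis_def)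
qed

lemma adapted_cobasis_transpose:
  assumes YX': "Y = transpose_mat X" and VU': "V = transpose_mat U"
    and T_transpose: "\<And>a. a < n \<Longrightarrow> T 0 a = transpose_mat (T a 0)"
  shows "adapted_cobasis = transpose_mat (adapted_basis)"
proof (rule eq_matI)
  fix l j assume "l < dim_row (transpose_mat (adapted_basis))" "j < dim_col (transpose_mat (adapted_basis))"
  hence l: "l < r" and j: "j < r" by (auto simp: adapted_basis_def)
  show "adapted_cobasis $$ (l,j) = transpose_mat (adapted_basis) $$ (l,j)"
  proof (cases "l < k*n")
    case True
    note lk = block_index_bounds[OF True]
    have "Y * T 0 (l mod n) = transpose_mat (T (l mod n) 0 * X)"
      unfolding YX' T_transpose[OF lk(2)] by (rule transpose_mult[symmetric, OF T_carrier X]) (use lk n_pos in auto)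
    hence "adapted_cobasis $$ (l,j) = transpose_mat (T (l mod n) 0 * X) $$ (l div n, j)"
      using l j True by (simp add: adapted_cobasis_index)
    also have "\<dots> = (T (l mod n) 0 * X) $$ (j, l div n)"
      using lk X T_carrier[OF lk(2) n_pos] j by (subst index_transpose_mat) auto
    also have "\<dots> = adapted_basis $$ (j,l)" using l j True by (simp add: adapted_basis_index)
    also have "\<dots> = transpose_mat (adapted_basis) $$ (l,j)" using adapted_basis_carrier l j by auto
    finally show ?thesis .
  next
    case False
    have "adapted_cobasis $$ (l,j) = V $$ (l - k*n, j)" using l j False by (simp add: adapted_cobasis_index)
    also have "\<dots> = U $$ (j, l - k*n)" unfolding VU' using U l j rkm False by auto
    also have "\<dots> = adapted_basis $$ (j,l)" using l j False by (simp add: adapted_basis_index)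
    also have "\<dots> = transpose_mat (adapted_basis) $$ (l,j)" using adapted_basis_carrier l j by auto
    finally show ?thesis .
  qed
qed (auto simp: adapted_cobasis_def adapted_basis_def)

end

context matrix_units
begin

lemma block_sizes_sum:
  assumes "trace (T 0 0) = of_nat k" "trace Q = of_nat m"
  shows "k*n + m = r"
proof -
  have "trace Q = of_nat r - of_nat (n*k)"
    unfolding Q_def using P_carrier trace_units_sum[OF assms(1)] by (simp add: trace_minus[of _ r])
  hence "of_nat (k*n + m) = (of_nat r :: complex)" using assms(2) by (simp add: mult.commute)
  thus ?thesis using of_nat_eq_iff by blast
qed

lemma block_similarity_exists:
  obtains k S Sinv where "k*n \<le> r" "S \<in> carrier_mat r r" "Sinv \<in> carrier_mat r r"
    "S * Sinv = 1\<^sub>m r" "Sinv * S = 1\<^sub>m r" "\<And>A. A \<in> carrier_mat n n \<Longrightarrow> Sinv * block_embed r k n A * S = expand A"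
proof -
  have T00: "T 0 0 \<in> carrier_mat r r" "T 0 0 * T 0 0 = T 0 0" using T_carrier[OF n_pos n_pos] T_mult[OF n_pos n_pos n_pos n_pos] by auto
  obtain k X Y where X: "X \<in> carrier_mat r k" and Y: "Y \<in> carrier_mat k r" and YX: "Y * X = 1\<^sub>m k"
    and XY: "T 0 0 = X * Y"
    by (rule idempotent_factorization[OF T00])
  obtain m U V where U: "U \<in> carrier_mat r m" and V: "V \<in> carrier_mat m r" and VU: "V * U = 1\<^sub>m m"
    and UV: "Q = U * V"
    by (rule idempotent_factorization[OF Q_carrier Q_idempotent])
  have rkm: "k*n + m = r"
    using block_sizes_sum XY UV trace_idempotent_factor[OF X Y YX] trace_idempotent_factor[OF U V VU] by simp
  interpret f: matrix_units_factorization n r T k m X Y U V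
    by unfold_locales (use X Y YX XY U V VU UV rkm in auto)
  show thesis
    using that[OF _ f.adapted_cobasis_carrier f.adapted_basis_carrier f.adapted_cobasis_mult_adapted_basis
        f.adapted_basis_mult_adapted_cobasis f.adapted_basis_block_embed] rkm
    by simp
qed

lemma P_symmetric:
  assumes T_transpose: "\<And>a b. a < n \<Longrightarrow> b < n \<Longrightarrow> transpose_mat (T a b) = T b a"
  shows "transpose_mat P = P"
proof (rule eq_matI)
  fix i j assume "i < dim_row P" "j < dim_col P"
  hence i: "i < r" and j: "j < r" using P_carrier by auto
  have "(\<Sum>a<n. T a a $$ (j,i)) = (\<Sum>a<n. T a a $$ (i,j))"
  proof (intro sum.cong refl)
    fix a assume "a \<in> {..<n}"
    hence a: "a < n" by simp
    show "T a a $$ (j,i) = T a a $$ (i,j)"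
      using arg_cong[OF T_transpose[OF a a], of "\<lambda>A. A $$ (i,j)"] T_carrier[OF a a] i j by simp
  qed
  thus "transpose_mat P $$ (i,j) = P $$ (i,j)" using i j by (simp add: P_def)
qed (use P_carrier in auto)

lemma block_similarity_orthogonal_exists:
  assumes T_transpose: "\<And>a b. a < n \<Longrightarrow> b < n \<Longrightarrow> transpose_mat (T a b) = T b a"
  obtains k S where "k*n \<le> r" "S \<in> carrier_mat r r" "S * transpose_mat S = 1\<^sub>m r" "transpose_mat S * S = 1\<^sub>m r"
    "\<And>A. A \<in> carrier_mat n n \<Longrightarrow> transpose_mat S * block_embed r k n A * S = expand A"
proof -
  have T00: "T 0 0 \<in> carrier_mat r r" "T 0 0 * T 0 0 = T 0 0" using T_carrier[OF n_pos n_pos] T_mult[OF n_pos n_pos n_pos n_pos] by auto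
  obtain k where trk: "trace (T 0 0) = of_nat k"
    using idempotent_factorization[OF T00] trace_idempotent_factor by metis
  obtain m where trm: "trace Q = of_nat m"
    using idempotent_factorization[OF Q_carrier Q_idempotent] trace_idempotent_factor by metis
  obtain X where X: "X \<in> carrier_mat r k" and XX: "transpose_mat X * X = 1\<^sub>m k"
    and XY: "X * transpose_mat X = T 0 0"
    by (rule symmetric_idempotent_factorization[OF T00 T_transpose[OF n_pos n_pos] trk])
  have Q_symmetric: "transpose_mat Q = Q" unfolding Q_def using P_carrier P_symmetric[OF T_transpose] by (simp add: transpose_minus[of _ r r])
  obtain U where U: "U \<in> carrier_mat r m" and UU: "transpose_mat U * U = 1\<^sub>m m"
    and UV: "U * transpose_mat U = Q"
    by (rule symmetric_idempotent_factorization[OF Q_carrier Q_idempotent Q_symmetric trm])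
  interpret f: matrix_units_factorization n r T k m X "transpose_mat X" U "transpose_mat U"
    by unfold_locales (use X XX XY U UU UV block_sizes_sum[OF trk trm] in auto)
  have St: "transpose_mat f.adapted_cobasis = f.adapted_basis"
    using f.adapted_cobasis_transpose[OF refl refl] T_transpose n_pos by simp
  show thesis
  proof (rule that)
    show "k*n \<le> r" using block_sizes_sum[OF trk trm] by simp
    show "f.adapted_cobasis \<in> carrier_mat r r" by (rule f.adapted_cobasis_carrier)
    show "f.adapted_cobasis * transpose_mat f.adapted_cobasis = 1\<^sub>m r"
      using f.adapted_cobasis_mult_adapted_basis by (simp add: St)
    show "transpose_mat f.adapted_cobasis * f.adapted_cobasis = 1\<^sub>m r"
      using f.adapted_basis_mult_adapted_cobasis by (simp add: St)
    show "transpose_mat f.adapted_cobasis * block_embed r k n A * f.adapted_cobasis = expand A"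
      if "A \<in> carrier_mat n n" for A
      using f.adapted_basis_block_embed[OF that] by (simp add: St)
  qed
qed

end

subsection \<open>Matrix units from orthogonal idempotents\<close>

context fixes r :: nat
begin

lemma square_add_mult_distrib:
  "A \<in> carrier_mat r r \<Longrightarrow> B \<in> carrier_mat r r \<Longrightarrow> C \<in> carrier_mat r r \<Longrightarrow> (A + B) * C = A * C + B * C"
  by (rule add_mult_distrib_mat)

lemma square_mult_add_distrib:
  "A \<in> carrier_mat r r \<Longrightarrow> B \<in> carrier_mat r r \<Longrightarrow> C \<in> carrier_mat r r \<Longrightarrow> A * (B + C) = A * B + A * C"
  by (rule mult_add_distrib_mat)

lemma square_smult_mult:
  "A \<in> carrier_mat r r \<Longrightarrow> B \<in> carrier_mat r r \<Longrightarrow> (c \<cdot>\<^sub>m A) * B = c \<cdot>\<^sub>m (A * B :: 'a::comm_semiring_0 mat)"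
  by (rule mult_smult_assoc_mat) auto

lemma square_mult_smult:
  "A \<in> carrier_mat r r \<Longrightarrow> B \<in> carrier_mat r r \<Longrightarrow> A * (c \<cdot>\<^sub>m B) = c \<cdot>\<^sub>m (A * B :: 'a::comm_semiring_0 mat)"
  by (rule mult_smult_distrib) auto

lemma square_mult_assoc:
  "A \<in> carrier_mat r r \<Longrightarrow> B \<in> carrier_mat r r \<Longrightarrow> C \<in> carrier_mat r r \<Longrightarrow> (A * B) * C = A * (B * C)"
  by (rule assoc_mult_mat)

lemma square_smult_add:
  "A \<in> carrier_mat r r \<Longrightarrow> B \<in> carrier_mat r r \<Longrightarrow> c \<cdot>\<^sub>m (A + B) = c \<cdot>\<^sub>m A + c \<cdot>\<^sub>m (B :: 'a::semiring mat)"
  by (rule add_smult_distrib_left_mat)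

lemma square_zero_mult: "A \<in> carrier_mat r r \<Longrightarrow> 0\<^sub>m r r * A = 0\<^sub>m r r"
  and square_mult_zero: "A \<in> carrier_mat r r \<Longrightarrow> A * 0\<^sub>m r r = 0\<^sub>m r r"
  by simp_all

lemmas square_mat_simps = left_add_zero_mat[of _ r r] right_add_zero_mat[of _ r r]
  square_zero_mult square_mult_zero zero_carrier_mat[of r r] add_carrier_mat[of _ r r] mult_carrier_mat[of _ r r _ r]
  smult_carrier_mat[of _ r r] square_add_mult_distrib square_mult_add_distrib square_smult_mult
  square_mult_smult square_mult_assoc square_smult_add smult_zero_mat[of _ r r]

end

lemma smult_smult_mat: "c \<cdot>\<^sub>m (d \<cdot>\<^sub>m A) = (c * d) \<cdot>\<^sub>m (A :: 'a::semigroup_mult mat)"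
  by (auto intro!: eq_matI simp: mult.assoc)

lemma smult_one_mat [simp]: "(1 :: 'a::monoid_mult) \<cdot>\<^sub>m A = A"
  by (auto intro!: eq_matI)

text \<open>Expanding the three hypotheses and \<open>G (G G) = (G G) G\<close> leaves linear relations between
  \<open>X G\<close>, \<open>G X\<close>, \<open>Y G\<close> and \<open>G Y\<close>; they are solved entrywise, separating real and imaginary parts.\<close>

lemma orthogonal_idempotents_pair_relations:
  fixes X Y G :: "complex mat"
  assumes c: "X \<in> carrier_mat r r" "Y \<in> carrier_mat r r" "G \<in> carrier_mat r r"
    and h1: "X * X = X" and h2: "Y * Y = Y" and h3: "X * Y = 0\<^sub>m r r" and h4: "Y * X = 0\<^sub>m r r"
    and h5: "(X + G + Y) * (X + G + Y) = 2 \<cdot>\<^sub>m (X + G + Y)"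
    and h6: "(X + (-1) \<cdot>\<^sub>m G + Y) * (X + (-1) \<cdot>\<^sub>m G + Y) = 2 \<cdot>\<^sub>m (X + (-1) \<cdot>\<^sub>m G + Y)"
    and h7: "(X + 2 \<cdot>\<^sub>m G + 4 \<cdot>\<^sub>m Y) * (4 \<cdot>\<^sub>m X + (-2) \<cdot>\<^sub>m G + Y) = 0\<^sub>m r r"
  shows "G * G = X + Y" "X * G = G * Y" "Y * G = G * X" "X * G + Y * G = G"
proof -
  have h1': "X * (X * Z) = X * Z" if "Z \<in> carrier_mat r r" for Z
    using h1 c that by (simp add: square_mult_assoc[where r=r, symmetric])
  have h2': "Y * (Y * Z) = Y * Z" if "Z \<in> carrier_mat r r" for Z
    using h2 c that by (simp add: square_mult_assoc[where r=r, symmetric])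
  have h3': "X * (Y * Z) = 0\<^sub>m r r" if "Z \<in> carrier_mat r r" for Z
    using h3 c that by (simp add: square_mult_assoc[where r=r, symmetric])
  have h4': "Y * (X * Z) = 0\<^sub>m r r" if "Z \<in> carrier_mat r r" for Z
    using h4 c that by (simp add: square_mult_assoc[where r=r, symmetric])
  note ss = square_mat_simps[where r=r] smult_smult_mat c h1 h2 h3 h4 h1' h2' h3' h4'
  note h5' = h5[simplified ss] and h6' = h6[simplified ss] and h7' = h7[simplified ss]
  have GG: "G * G = X + Y"
  proof (rule eq_matI)
    fix i j assume "i < dim_row (X + Y)" "j < dim_col (X + Y)"
    hence ij: "i < r" "j < r" using c by auto
    show "(G * G) $$ (i,j) = (X + Y) $$ (i,j)"
      using arg_cong[OF h5', of "\<lambda>A. A $$ (i,j)"] arg_cong[OF h6', of "\<lambda>A. A $$ (i,j)"] ij c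
      by (simp del: index_mult_mat(1) add: complex_eq_iff; linarith)
  qed (use c in auto)
  have GGG: "G * X + G * Y = X * G + Y * G"
  proof -
    have "G * (G * G) = (G * G) * G" using c by (simp add: square_mult_assoc[where r=r])
    thus ?thesis unfolding GG using c by (simp add: square_mat_simps[where r=r])
  qed
  have entries: "(X * G) $$ (i,j) = (G * Y) $$ (i,j)" "(Y * G) $$ (i,j) = (G * X) $$ (i,j)"
      "(X * G) $$ (i,j) + (Y * G) $$ (i,j) = G $$ (i,j)" if ij: "i < r" "j < r" for i j
    using arg_cong[OF h5', of "\<lambda>A. A $$ (i,j)"] arg_cong[OF h6', of "\<lambda>A. A $$ (i,j)"]
      arg_cong[OF h7', of "\<lambda>A. A $$ (i,j)"] arg_cong[OF GGG, of "\<lambda>A. A $$ (i,j)"] ij c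
    by (simp del: index_mult_mat(1) add: complex_eq_iff; linarith)+
  show "G * G = X + Y" by (rule GG)
  show "X * G = G * Y" by (rule eq_matI) (use entries(1) c in \<open>auto simp del: index_mult_mat(1)\<close>)
  show "Y * G = G * X" by (rule eq_matI) (use entries(2) c in \<open>auto simp del: index_mult_mat(1)\<close>)
  show "X * G + Y * G = G" by (rule eq_matI) (use entries(3) c in \<open>auto simp del: index_mult_mat(1)\<close>)
qed

lemma idempotents_triple_relation:
  fixes Pa Pb Pc Gab Gbc Gac :: "complex mat"
  assumes c: "Pa \<in> carrier_mat r r" "Pb \<in> carrier_mat r r" "Pc \<in> carrier_mat r r" "Gab \<in> carrier_mat r r" "Gbc \<in> carrier_mat r r" "Gac \<in> carrier_mat r r"
    and p1: "Pa*Pa = Pa" "Pb*Pb = Pb" "Pc*Pc = Pc"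
    and p2: "Pa*Pb = 0\<^sub>m r r" "Pb*Pa = 0\<^sub>m r r" "Pa*Pc = 0\<^sub>m r r" "Pc*Pa = 0\<^sub>m r r" "Pb*Pc = 0\<^sub>m r r" "Pc*Pb = 0\<^sub>m r r"
    and g1: "Pa*Gab = Gab*Pb" "Pb*Gab = Gab*Pa" "Pb*Gbc = Gbc*Pc" "Pc*Gbc = Gbc*Pb" "Pa*Gac = Gac*Pc" "Pc*Gac = Gac*Pa"
    and g0: "Pc*Gab = 0\<^sub>m r r" "Gab*Pc = 0\<^sub>m r r" "Pa*Gbc = 0\<^sub>m r r" "Gbc*Pa = 0\<^sub>m r r" "Pb*Gac = 0\<^sub>m r r" "Gac*Pb = 0\<^sub>m r r"
    and h: "(Pa + Pb + Pc + Gab + Gbc + Gac) * (Pa + Pb + Pc + Gab + Gbc + Gac) = 3 \<cdot>\<^sub>m (Pa + Pb + Pc + Gab + Gbc + Gac)"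
  shows "Pa * Gab * (Pb * Gbc) = Pa * Gac"
proof -
  define Z where "Z = Pa + Pb + Pc + Gab + Gbc + Gac"
  have Zc: "Z \<in> carrier_mat r r" using c by (simp add: Z_def)
  have "Pa * (Z * Z) * Pc = Pa * (3 \<cdot>\<^sub>m Z) * Pc" using h Z_def by simp
  have r: "\<And>A B C Z. A \<in> carrier_mat r r \<Longrightarrow> B \<in> carrier_mat r r \<Longrightarrow> Z \<in> carrier_mat r r \<Longrightarrow> A * B = C \<Longrightarrow> A * (B * Z) = C * Z"
    by (metis square_mult_assoc)
  note rr = p1[THEN r[rotated 3]] p2[THEN r[rotated 3]] g1[THEN r[rotated 3]] g0[THEN r[rotated 3]]
  note ss = square_mat_simps[where r=r] smult_smult_mat c rr p1 p2 g1 g0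
  have e: "Pa * (Z * Z) * Pc = Pa * (3 \<cdot>\<^sub>m Z) * Pc" using h Z_def by simp
  note e' = e[unfolded Z_def, simplified ss, simplified ss]
  have g: "Gab*(Gbc*Pc) = Gac*Pc"
  proof (rule eq_matI)
    fix i j assume "i < dim_row (Gac*Pc)" "j < dim_col (Gac*Pc)"
    hence ij: "i < r" "j < r" using c by auto
    show "(Gab*(Gbc*Pc)) $$ (i,j) = (Gac*Pc) $$ (i,j)"
      using arg_cong[OF e', of "\<lambda>A. A$$(i,j)"] ij c
      by (simp del: index_mult_mat(1) add: complex_eq_iff; linarith)
  qed (use c in auto)
  show ?thesis using g by (simp add: ss)
qed

locale unit_generators =
  fixes n r :: nat and P :: "nat \<Rightarrow> complex mat" and G :: "nat \<Rightarrow> nat \<Rightarrow> complex mat"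
  assumes n_pos: "0 < n"
    and P_carrier: "\<And>a. a < n \<Longrightarrow> P a \<in> carrier_mat r r"
    and G_carrier: "\<And>a b. a < n \<Longrightarrow> b < n \<Longrightarrow> G a b \<in> carrier_mat r r"
    and G_commute: "\<And>a b. G a b = G b a"
    and P_idempotent: "\<And>a. a < n \<Longrightarrow> P a * P a = P a"
    and P_orthogonal: "\<And>a b. a < n \<Longrightarrow> b < n \<Longrightarrow> a \<noteq> b \<Longrightarrow> P a * P b = 0\<^sub>m r r"
    and G_square: "\<And>a b. a < n \<Longrightarrow> b < n \<Longrightarrow> a \<noteq> b \<Longrightarrow> G a b * G a b = P a + P b"
    and P_G_commute: "\<And>a b. a < n \<Longrightarrow> b < n \<Longrightarrow> a \<noteq> b \<Longrightarrow> P a * G a b = G a b * P b"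
    and P_G_sum: "\<And>a b. a < n \<Longrightarrow> b < n \<Longrightarrow> a \<noteq> b \<Longrightarrow> P a * G a b + P b * G a b = G a b"
    and P_G_chain: "\<And>a b c. a < n \<Longrightarrow> b < n \<Longrightarrow> c < n \<Longrightarrow> a \<noteq> b \<Longrightarrow> b \<noteq> c \<Longrightarrow> a \<noteq> c \<Longrightarrow>
              P a * G a b * (P b * G b c) = P a * G a c"
begin

definition T :: "nat \<Rightarrow> nat \<Rightarrow> complex mat" where "T a b = (if a = b then P a else P a * G a b)"

lemma T_carrier: "a < n \<Longrightarrow> b < n \<Longrightarrow> T a b \<in> carrier_mat r r"
  using P_carrier G_carrier by (simp add: T_def square_mat_simps[where r=r] smult_smult_mat)

lemma T_mult_P: assumes ab: "a < n" "b < n" shows "T a b * P b = T a b"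
proof (cases "a = b")
  case True thus ?thesis using P_idempotent ab by (simp add: T_def)
next
  case False
  have "P a * G a b * P b = G a b * (P b * P b)" using P_G_commute[OF ab False] P_carrier G_carrier ab
    by (simp add: square_mat_simps[where r=r] smult_smult_mat)
  thus ?thesis using False P_G_commute[OF ab False] P_idempotent ab by (simp add: T_def)
qed

lemma P_mult_T: assumes ab: "a < n" "b < n" shows "P a * T a b = T a b"
proof (cases "a = b")
  case True thus ?thesis using P_idempotent ab by (simp add: T_def)
next
  case False
  have "P a * (P a * G a b) = (P a * P a) * G a b" using P_carrier G_carrier ab by (simp add: square_mat_simps[where r=r] smult_smult_mat)
  thus ?thesis using False P_idempotent ab by (simp add: T_def)
qed

lemma T_mult: assumes abcd: "a < n" "b < n" "c < n" "d < n"
  shows "T a b * T c d = (if b = c then T a d else 0\<^sub>m r r)"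
proof (cases "b = c")
  case False
  have "T a b * T c d = (T a b * P b) * (P c * T c d)" using T_mult_P P_mult_T abcd by simp
  also have "\<dots> = T a b * ((P b * P c) * T c d)"
    using abcd T_carrier P_carrier by (simp add: square_mat_simps[where r=r] smult_smult_mat)
  also have "\<dots> = 0\<^sub>m r r" using P_orthogonal[OF abcd(2,3) False] abcd T_carrier by (simp add: square_mat_simps[where r=r] smult_smult_mat)
  finally show ?thesis using False by simp
next
  case True
  note bc = True
  show ?thesis
  proof (cases "a = b")
    case True
    thus ?thesis using bc P_mult_T abcd by (simp add: T_def)
  next
    case False
    note ab = False
    show ?thesis
    proof (cases "d = b")
      case True
      thus ?thesis using bc T_mult_P abcd by (simp add: T_def)
    next
      case False
      note db = False
      show ?thesis
      proof (cases "d = a")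
        case True
        have "T a b * T b a = P a * G a b * (P b * G a b)" using ab G_commute by (simp add: T_def)
        also have "\<dots> = P a * (G a b * (G a b * P a))"
          using P_G_commute[OF abcd(2,1)] ab abcd P_carrier G_carrier G_commute by (simp add: square_mat_simps[where r=r] smult_smult_mat)
        also have "\<dots> = P a * ((P a + P b) * P a)"
          using G_square[OF abcd(1,2) ab] abcd P_carrier G_carrier by (simp add: square_mult_assoc[where r=r, symmetric])
        also have "\<dots> = P a" using abcd P_carrier P_idempotent P_orthogonal[OF abcd(2,1)] ab
          by (simp add: square_mat_simps[where r=r] smult_smult_mat)
        finally show ?thesis using True bc by (simp add: T_def)
      next
        case False
        thus ?thesis using P_G_chain[OF abcd(1,2,4) ab db[symmetric] False[symmetric]] bc ab db
          by (simp add: T_def)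
      qed
    qed
  qed
qed

lemma G_eq_T_sum: "a < n \<Longrightarrow> b < n \<Longrightarrow> a \<noteq> b \<Longrightarrow> G a b = T a b + T b a"
  using P_G_sum[of a b] G_commute[of b a] by (simp add: T_def)

lemma T_matrix_units: "matrix_units n r T"
  by unfold_locales (use n_pos T_carrier T_mult in auto)

end

subsection \<open>Zero product preservers\<close>

lemma (in vec_space) lin_indpt_singleton:
  assumes v: "v \<in> carrier_vec n" and v0: "v \<noteq> 0\<^sub>v n"
  shows "lin_indpt {v}"
  apply (rule finite_lin_indpt2)
  using v apply simp_all
proof -
  fix a assume lc: "lincomb a {v} = 0\<^sub>v n"
  obtain i where i: "i < n" "v $ i \<noteq> 0" using v v0 by (metis carrier_vecD eq_vecI index_zero_vec(1,2))
  have "lincomb a {v} $ i = a v * v $ i" using lincomb_index[OF i(1), of "{v}" a] v by simp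
  hence "a v * v $ i = 0" using lc i by simp
  thus "a v = 0" using i by simp
qed

lemma rank_mat_outer_self:
  fixes u :: "nat \<Rightarrow> real"
  assumes j0: "j0 < n" "u j0 \<noteq> 0"
  shows "vec_space.rank n (mat n n (\<lambda>(i,j). u i * u j)) = 1"
proof -
  interpret vec_space "TYPE(real)" n .
  define R where "R = mat n n (\<lambda>(i,j). u i * u j)"
  have R: "R \<in> carrier_mat n n" by (simp add: R_def)
  have le: "rank R \<le> 1"
    by (rule rank_le_1_product_entries[OF R, of u u]) (simp add: R_def)
  have c: "col R j0 \<in> carrier_vec n" using R j0 by simp
  have "col R j0 $ j0 = u j0 * u j0" using j0 by (simp add: R_def)
  hence c0: "col R j0 \<noteq> 0\<^sub>v n" using j0 by auto
  have "col R j0 \<in> set (cols R)" using R j0 by (simp add: cols_def)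
  hence "rank R \<ge> card {col R j0}"
    by (intro rank_ge_card_indpt[OF R] lin_indpt_singleton[OF c c0]) auto
  thus ?thesis using le unfolding R_def by simp
qed

lemma normalized_outer_rank1_sym_idem:
  fixes s :: "nat \<Rightarrow> real"
  assumes N: "(\<Sum>i<n. s i * s i) \<noteq> 0"
  shows "mat n n (\<lambda>(i,j). s i * s j / (\<Sum>i<n. s i * s i)) \<in> real_rank1_sym_idems n"
proof -
  define N where "N = (\<Sum>i<n. s i * s i)"
  have "N \<ge> 0" unfolding N_def by (intro sum_nonneg) simp
  hence N0: "N > 0" using N unfolding N_def by linarith
  define R where "R = mat n n (\<lambda>(i,j). s i * s j / N)"
  obtain j0 where j0: "j0 < n" "s j0 \<noteq> 0"
  proof -
    have "\<not> (\<forall>i<n. s i = 0)"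
    proof
      assume "\<forall>i<n. s i = 0"
      hence "(\<Sum>i<n. s i * s i) = 0" by simp
      thus False using N by simp
    qed
    thus ?thesis using that by auto
  qed
  define u where "u = (\<lambda>i. s i / sqrt N)"
  have Ru: "R = mat n n (\<lambda>(i,j). u i * u j)"
    unfolding R_def u_def using N0 by (auto intro!: eq_matI simp: real_sqrt_mult[symmetric])
  have "vec_space.rank n R = 1" unfolding Ru by (rule rank_mat_outer_self[OF j0(1)]) (use j0 N0 in \<open>simp add: u_def\<close>)
  moreover have "R * R = R"
  proof (rule eq_matI)
    fix i j assume "i < dim_row R" "j < dim_col R"
    hence ij: "i < n" "j < n" by (auto simp: R_def)
    have "(R * R) $$ (i,j) = (\<Sum>l<n. (s i * s l / N) * (s l * s j / N))"
      using index_mult_mat_sum[of R n n R n i j] ij by (simp add: R_def)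
    also have "\<dots> = (\<Sum>l<n. (s i * s j / (N * N)) * (s l * s l))"
      by (intro sum.cong refl) (simp add: field_simps)
    also have "\<dots> = (s i * s j / (N * N)) * N"
      unfolding N_def by (simp add: sum_distrib_left)
    also have "\<dots> = s i * s j / N * (N / N)" by (simp add: field_simps)
    also have "\<dots> = R $$ (i,j)" using N0 ij by (simp add: R_def)
    finally show "(R * R) $$ (i,j) = R $$ (i,j)" .
  qed (auto simp: R_def)
  moreover have "transpose_mat R = R" by (auto intro!: eq_matI simp: R_def mult.commute)
  ultimately show ?thesis unfolding real_rank1_sym_idems_def R_def N_def by auto
qed

lemma of_real_rank1_sym_idem:
  assumes "A \<in> real_rank1_sym_idems n"
  shows "map_mat complex_of_real A \<in> sym_mats n"
    "map_mat complex_of_real A * map_mat complex_of_real A = map_mat complex_of_real A"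
proof -
  have A: "A \<in> carrier_mat n n" "transpose_mat A = A" "A * A = A"
    using assms by (auto simp: real_rank1_sym_idems_def)
  have "transpose_mat (map_mat complex_of_real A) = map_mat complex_of_real (transpose_mat A)"
    by (auto intro!: eq_matI)
  thus "map_mat complex_of_real A \<in> sym_mats n" using A by (simp add: sym_mats_def)
  have "map_mat complex_of_real (A * A) = map_mat complex_of_real A * map_mat complex_of_real A"
    by (rule of_real_hom.mat_hom_mult[OF A(1) A(1)])
  thus "map_mat complex_of_real A * map_mat complex_of_real A = map_mat complex_of_real A" using A by simp
qed

definition unit_diag :: "nat \<Rightarrow> nat \<Rightarrow> complex mat" where
  "unit_diag n a = mat n n (\<lambda>(i,j). if i = a \<and> j = a then 1 else 0)"
definition unit_sym :: "nat \<Rightarrow> nat \<Rightarrow> nat \<Rightarrow> complex mat" where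
  "unit_sym n a b = mat n n (\<lambda>(i,j). if (i = a \<and> j = b) \<or> (i = b \<and> j = a) then 1 else 0)"
definition real_outer :: "nat \<Rightarrow> (nat \<Rightarrow> real) \<Rightarrow> complex mat" where
  "real_outer n s = mat n n (\<lambda>(i,j). complex_of_real (s i * s j))"

lemma unit_sym_commute: "unit_sym n a b = unit_sym n b a" by (auto simp: unit_sym_def intro!: eq_matI)

lemma unit_diag_sym: "unit_diag n a \<in> sym_mats n" by (auto simp: sym_mats_def unit_diag_def intro!: eq_matI)
lemma unit_sym_sym: "unit_sym n a b \<in> sym_mats n" by (auto simp: sym_mats_def unit_sym_def intro!: eq_matI)
lemma real_outer_sym: "real_outer n s \<in> sym_mats n" by (auto simp: sym_mats_def real_outer_def intro!: eq_matI simp: mult.commute)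
lemma sym_mats_add: "A \<in> sym_mats n \<Longrightarrow> B \<in> sym_mats n \<Longrightarrow> A + B \<in> sym_mats n"
  by (auto simp: sym_mats_def transpose_add)
lemma sym_mats_smult: assumes "A \<in> sym_mats n" shows "c \<cdot>\<^sub>m A \<in> sym_mats n"
proof -
  have A: "A \<in> carrier_mat n n" "transpose_mat A = A" using assms by (auto simp: sym_mats_def)
  have "A $$ (j,i) = A $$ (i,j)" if "i < n" "j < n" for i j
    using arg_cong[OF A(2), of "\<lambda>M. M$$(i,j)"] that A(1) by auto
  thus ?thesis using A(1) by (auto simp: sym_mats_def intro!: eq_matI)
qed
lemma sym_mats_carrier: "A \<in> sym_mats n \<Longrightarrow> A \<in> carrier_mat n n"
  by (simp add: sym_mats_def)

lemmas sym_mats_intros = sym_mats_add sym_mats_smult unit_diag_sym unit_sym_sym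

lemma sym_mats_zero_dim: "A \<in> sym_mats 0 \<Longrightarrow> A = 0\<^sub>m 0 0"
  and block_embed_zero_dim: "block_embed r k 0 B = 0\<^sub>m r r"
  by (auto simp: sym_mats_def block_embed_def intro!: eq_matI)

lemma of_real_normalized_outer: "N \<noteq> 0 \<Longrightarrow>
   map_mat complex_of_real (mat n n (\<lambda>(i,j). s i * s j / N))
     = (1 / complex_of_real N) \<cdot>\<^sub>m real_outer n s"
  by (auto intro!: eq_matI simp: real_outer_def)

lemma sum_lessThan_support: fixes n :: nat shows "finite K \<Longrightarrow> K \<subseteq> {..<n} \<Longrightarrow> (\<And>i. i < n \<Longrightarrow> i \<notin> K \<Longrightarrow> f i = 0) \<Longrightarrow>
   (\<Sum>i<n. f i) = (\<Sum>i\<in>K. f i)"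
  by (rule sum.mono_neutral_right) auto

definition real_unit_vec :: "nat \<Rightarrow> nat \<Rightarrow> real" where "real_unit_vec a = (\<lambda>i. if i = a then 1 else 0)"

lemma real_outer_unit_vec: "real_outer n (real_unit_vec a) = unit_diag n a"
  by (auto intro!: eq_matI simp: real_outer_def unit_diag_def real_unit_vec_def)
lemma real_outer_unit_vec_add: "a \<noteq> b \<Longrightarrow> real_outer n (\<lambda>i. real_unit_vec a i + real_unit_vec b i) = unit_diag n a + unit_sym n a b + unit_diag n b"
  by (auto intro!: eq_matI simp: real_outer_def unit_diag_def unit_sym_def real_unit_vec_def)
lemma real_outer_unit_vec_diff: "a \<noteq> b \<Longrightarrow> real_outer n (\<lambda>i. real_unit_vec a i - real_unit_vec b i) = unit_diag n a + (-1) \<cdot>\<^sub>m unit_sym n a b + unit_diag n b"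
  by (auto intro!: eq_matI simp: real_outer_def unit_diag_def unit_sym_def real_unit_vec_def)
lemma real_outer_unit_vec_add3: "a \<noteq> b \<Longrightarrow> b \<noteq> c \<Longrightarrow> a \<noteq> c \<Longrightarrow> real_outer n (\<lambda>i. real_unit_vec a i + real_unit_vec b i + real_unit_vec c i) =
   unit_diag n a + unit_diag n b + unit_diag n c + unit_sym n a b + unit_sym n b c + unit_sym n a c"
  by (auto intro!: eq_matI simp: real_outer_def unit_diag_def unit_sym_def real_unit_vec_def)

lemma real_unit_vec_norm: "a < n \<Longrightarrow> (\<Sum>i<n. real_unit_vec a i * real_unit_vec a i) = 1"
  by (subst sum_lessThan_support[of "{a}"]) (auto simp: real_unit_vec_def)
lemma real_unit_vec_add_norm: "a < n \<Longrightarrow> b < n \<Longrightarrow> a \<noteq> b \<Longrightarrow> (\<Sum>i<n. (real_unit_vec a i + real_unit_vec b i) * (real_unit_vec a i + real_unit_vec b i)) = 2"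
  by (subst sum_lessThan_support[of "{a,b}"]) (auto simp: real_unit_vec_def)
lemma real_unit_vec_diff_norm: "a < n \<Longrightarrow> b < n \<Longrightarrow> a \<noteq> b \<Longrightarrow> (\<Sum>i<n. (real_unit_vec a i - real_unit_vec b i) * (real_unit_vec a i - real_unit_vec b i)) = 2"
  by (subst sum_lessThan_support[of "{a,b}"]) (auto simp: real_unit_vec_def)
lemma real_unit_vec_add3_norm: "a < n \<Longrightarrow> b < n \<Longrightarrow> c < n \<Longrightarrow> a \<noteq> b \<Longrightarrow> b \<noteq> c \<Longrightarrow> a \<noteq> c \<Longrightarrow>
   (\<Sum>i<n. (real_unit_vec a i + real_unit_vec b i + real_unit_vec c i) * (real_unit_vec a i + real_unit_vec b i + real_unit_vec c i)) = 3"
  by (subst sum_lessThan_support[of "{a,b,c}"]) (auto simp: real_unit_vec_def)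

lemma unit_diag_mult_unit_diag: "a \<noteq> b \<Longrightarrow> unit_diag n a * unit_diag n b = 0\<^sub>m n n"
  by (auto intro!: eq_matI sum.neutral simp: unit_diag_def scalar_prod_def)
lemma unit_diag_mult_unit_sym: "c \<noteq> a \<Longrightarrow> c \<noteq> b \<Longrightarrow> unit_diag n c * unit_sym n a b = 0\<^sub>m n n"
  by (auto intro!: eq_matI sum.neutral simp: unit_diag_def unit_sym_def scalar_prod_def)
lemma unit_sym_mult_unit_diag: "c \<noteq> a \<Longrightarrow> c \<noteq> b \<Longrightarrow> unit_sym n a b * unit_diag n c = 0\<^sub>m n n"
  by (auto intro!: eq_matI sum.neutral simp: unit_diag_def unit_sym_def scalar_prod_def)
text \<open>In rows and columns \<open>a, b\<close> this is \<open>[1 2; 2 4] [4 -2; -2 1] = 0\<close>.\<close>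

lemma unit_pair_zero_product:
  assumes ab: "a < n" "b < n" "a \<noteq> b"
  shows "(unit_diag n a + 2 \<cdot>\<^sub>m unit_sym n a b + 4 \<cdot>\<^sub>m unit_diag n b) * (4 \<cdot>\<^sub>m unit_diag n a + (-2) \<cdot>\<^sub>m unit_sym n a b + unit_diag n b) = 0\<^sub>m n n"
proof (rule eq_matI)
  fix i j assume "i < dim_row (0\<^sub>m n n :: complex mat)" "j < dim_col (0\<^sub>m n n :: complex mat)"
  hence ij: "i < n" "j < n" by auto
  define A where "A = unit_diag n a + 2 \<cdot>\<^sub>m unit_sym n a b + 4 \<cdot>\<^sub>m unit_diag n b"
  define B where "B = 4 \<cdot>\<^sub>m unit_diag n a + (-2) \<cdot>\<^sub>m unit_sym n a b + unit_diag n b"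
  have A: "A \<in> carrier_mat n n" and B: "B \<in> carrier_mat n n" by (auto simp: A_def B_def unit_diag_def unit_sym_def)
  have "(A * B) $$ (i,j) = (\<Sum>l<n. A$$(i,l) * B$$(l,j))" by (rule index_mult_mat_sum[OF A B ij])
  also have "\<dots> = (\<Sum>l\<in>{a,b}. A$$(i,l) * B$$(l,j))"
    by (rule sum_lessThan_support) (use ab ij in \<open>auto simp: A_def unit_diag_def unit_sym_def\<close>)
  also have "\<dots> = 0" using ab ij by (auto simp: A_def B_def unit_diag_def unit_sym_def)
  finally show "(A * B) $$ (i,j) = 0\<^sub>m n n $$ (i,j)" using ij by simp
qed (auto simp: unit_diag_def unit_sym_def)

definition restrict_entries :: "nat \<Rightarrow> complex mat \<Rightarrow> (nat \<times> nat) set \<Rightarrow> complex mat" where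
  "restrict_entries n A D = mat n n (\<lambda>(i,j). if (min i j, max i j) \<in> D then A$$(i,j) else 0)"

lemma sym_mats_index: "A \<in> sym_mats n \<Longrightarrow> i < n \<Longrightarrow> j < n \<Longrightarrow> A$$(j,i) = A$$(i,j)"
  unfolding sym_mats_def by (metis (mono_tags, lifting) carrier_matD(1,2) index_transpose_mat(1) mem_Collect_eq)

lemma unit_diag_carrier[simp]: "unit_diag n a \<in> carrier_mat n n" by (simp add: unit_diag_def)
lemma unit_sym_carrier[simp]: "unit_sym n a b \<in> carrier_mat n n" by (simp add: unit_sym_def)

lemma restrict_entries_sym: assumes "A \<in> sym_mats n" shows "restrict_entries n A D \<in> sym_mats n"
  using sym_mats_index[OF assms] by (auto simp: sym_mats_def restrict_entries_def intro!: eq_matI simp: min.commute max.commute)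

lemma restrict_entries_empty: "restrict_entries n A {} = 0\<^sub>m n n"
  by (auto simp: restrict_entries_def intro!: eq_matI)

lemma restrict_entries_insert: "p \<notin> D \<Longrightarrow> restrict_entries n A (insert p D) = restrict_entries n A D + restrict_entries n A {p}"
  by (auto simp: restrict_entries_def intro!: eq_matI)

lemma restrict_entries_diag: "a < n \<Longrightarrow> restrict_entries n A {(a,a)} = A$$(a,a) \<cdot>\<^sub>m unit_diag n a"
  by (auto simp: restrict_entries_def unit_diag_def intro!: eq_matI simp: min_def max_def split: if_splits)

lemma restrict_entries_off: assumes "A \<in> sym_mats n" "a < b" "b < n"
  shows "restrict_entries n A {(a,b)} = A$$(a,b) \<cdot>\<^sub>m unit_sym n a b"
  using assms sym_mats_index[OF assms(1)]
  by (auto simp: restrict_entries_def unit_sym_def intro!: eq_matI simp: min_def max_def split: if_splits)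

lemma restrict_entries_all: assumes "A \<in> sym_mats n" shows "restrict_entries n A {(a,b). a \<le> b \<and> b < n} = A"
  using assms by (auto simp: restrict_entries_def sym_mats_def intro!: eq_matI simp: min_def max_def)

lemma similarity_mult:
  fixes S Sinv B C :: "complex mat"
  assumes c: "S \<in> carrier_mat r r" "Sinv \<in> carrier_mat r r" "B \<in> carrier_mat r r" "C \<in> carrier_mat r r"
    and e: "S * Sinv = 1\<^sub>m r"
  shows "(Sinv * B * S) * (Sinv * C * S) = Sinv * (B * C) * S"
proof -
  have e': "S * (Sinv * Z) = Z" if "Z \<in> carrier_mat r r" for Z
    using e c that by (simp add: square_mult_assoc[where r=r, symmetric])
  show ?thesis using c by (simp add: square_mult_assoc[where r=r] mult_carrier_mat e')
qed

lemma congruence_transpose: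
  fixes S B :: "complex mat"
  assumes c: "S \<in> carrier_mat r r" "B \<in> carrier_mat r r"
  shows "transpose_mat (transpose_mat S * B * S) = transpose_mat S * transpose_mat B * S"
  using c by (simp add: transpose_mult[of _ r r _ r] square_mult_assoc[where r=r])

locale zero_product_preserver =
  fixes n r :: nat and \<Phi> :: "complex mat \<Rightarrow> complex mat"
  assumes into: "\<And>A. A \<in> sym_mats n \<Longrightarrow> \<Phi> A \<in> carrier_mat r r"
    and additive: "\<And>A B. A \<in> sym_mats n \<Longrightarrow> B \<in> sym_mats n \<Longrightarrow> \<Phi> (A + B) = \<Phi> A + \<Phi> B"
    and homog: "\<And>c A. A \<in> sym_mats n \<Longrightarrow> \<Phi> (c \<cdot>\<^sub>m A) = c \<cdot>\<^sub>m \<Phi> A"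
    and zero_prod: "\<And>A B. A \<in> sym_mats n \<Longrightarrow> B \<in> sym_mats n \<Longrightarrow> A * B = 0\<^sub>m n n
                      \<Longrightarrow> \<Phi> A * \<Phi> B = 0\<^sub>m r r"
begin

lemma preserver_zero: "\<Phi> (0\<^sub>m n n) = 0\<^sub>m r r"
proof -
  have z: "0\<^sub>m n n \<in> sym_mats n" by (auto simp: sym_mats_def intro!: eq_matI)
  have "\<Phi> (0 \<cdot>\<^sub>m 0\<^sub>m n n) = 0 \<cdot>\<^sub>m \<Phi> (0\<^sub>m n n)" by (rule homog[OF z])
  moreover have "(0::complex) \<cdot>\<^sub>m 0\<^sub>m n n = 0\<^sub>m n n" by (auto intro!: eq_matI)
  moreover have "(0::complex) \<cdot>\<^sub>m \<Phi> (0\<^sub>m n n) = 0\<^sub>m r r" using into[OF z] by (auto intro!: eq_matI)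
  ultimately show ?thesis by simp
qed

end

locale rank1_idempotent_preserver = zero_product_preserver +
  assumes rank1_idempotent: "\<forall>A \<in> real_rank1_sym_idems n.
             \<Phi> (map_mat complex_of_real A) * \<Phi> (map_mat complex_of_real A) = \<Phi> (map_mat complex_of_real A)"
begin

lemma preserver_real_outer_square:
  assumes N: "(\<Sum>i<n. s i * s i) \<noteq> 0"
  shows "\<Phi> (real_outer n s) * \<Phi> (real_outer n s) = complex_of_real (\<Sum>i<n. s i * s i) \<cdot>\<^sub>m \<Phi> (real_outer n s)"
proof -
  define N where "N = complex_of_real (\<Sum>i<n. s i * s i)"
  have N0: "N \<noteq> 0" unfolding N_def using N of_real_eq_0_iff by blast
  define M where "M = \<Phi> (real_outer n s)"
  have M: "M \<in> carrier_mat r r" using into[OF real_outer_sym] by (simp add: M_def)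
  have "\<Phi> ((1/N) \<cdot>\<^sub>m real_outer n s) * \<Phi> ((1/N) \<cdot>\<^sub>m real_outer n s) = \<Phi> ((1/N) \<cdot>\<^sub>m real_outer n s)"
  proof -
    define R where "R = mat n n (\<lambda>(i,j). s i * s j / (\<Sum>i<n. s i * s i))"
    have "\<Phi> (map_mat complex_of_real R) * \<Phi> (map_mat complex_of_real R) = \<Phi> (map_mat complex_of_real R)"
      using rank1_idempotent normalized_outer_rank1_sym_idem[OF N] unfolding R_def by blast
    moreover have "map_mat complex_of_real R = (1/N) \<cdot>\<^sub>m real_outer n s"
      unfolding R_def N_def by (rule of_real_normalized_outer[OF N])
    ultimately show ?thesis by simp
  qed
  hence e: "((1/N) \<cdot>\<^sub>m M) * ((1/N) \<cdot>\<^sub>m M) = (1/N) \<cdot>\<^sub>m M" using homog[OF real_outer_sym] by (simp add: M_def)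
  show ?thesis unfolding M_def[symmetric] N_def[symmetric]
  proof (rule eq_matI)
    fix i j assume "i < dim_row (N \<cdot>\<^sub>m M)" "j < dim_col (N \<cdot>\<^sub>m M)"
    hence ij: "i < r" "j < r" using M by auto
    have "((1/N) \<cdot>\<^sub>m M * ((1/N) \<cdot>\<^sub>m M)) = ((1/N) * (1/N)) \<cdot>\<^sub>m (M * M)"
      using M by (simp add: mult_smult_assoc_mat[of _ r r _ r] mult_smult_distrib[of _ r r _ r] smult_smult_mat)
    hence "((1/N) * (1/N)) * (M*M) $$ (i,j) = (1/N) * M $$ (i,j)"
      using arg_cong[OF e, of "\<lambda>A. A$$(i,j)"] ij M by (simp del: index_mult_mat(1))
    hence "(M*M) $$ (i,j) = N * M $$ (i,j)" using N0 by (simp add: field_simps)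
    thus "(M*M) $$ (i,j) = (N \<cdot>\<^sub>m M) $$ (i,j)" using ij M by (simp del: index_mult_mat(1))
  qed (use M in auto)
qed

lemma preserver_unit_diag_idempotent: "a < n \<Longrightarrow> \<Phi> (unit_diag n a) * \<Phi> (unit_diag n a) = \<Phi> (unit_diag n a)"
  using preserver_real_outer_square[of "real_unit_vec a"] real_unit_vec_norm[of a] real_outer_unit_vec[of n a] into[OF unit_diag_sym] by simp

lemma preserver_pair_relations:
  assumes ab: "a < n" "b < n" "a \<noteq> b"
  shows "\<Phi> (unit_sym n a b) * \<Phi> (unit_sym n a b) = \<Phi> (unit_diag n a) + \<Phi> (unit_diag n b)"
    "\<Phi> (unit_diag n a) * \<Phi> (unit_sym n a b) = \<Phi> (unit_sym n a b) * \<Phi> (unit_diag n b)"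
    "\<Phi> (unit_diag n b) * \<Phi> (unit_sym n a b) = \<Phi> (unit_sym n a b) * \<Phi> (unit_diag n a)"
    "\<Phi> (unit_diag n a) * \<Phi> (unit_sym n a b) + \<Phi> (unit_diag n b) * \<Phi> (unit_sym n a b) = \<Phi> (unit_sym n a b)"
proof -
  define X where "X = \<Phi> (unit_diag n a)"
  define Y where "Y = \<Phi> (unit_diag n b)"
  define G where "G = \<Phi> (unit_sym n a b)"
  have c: "X \<in> carrier_mat r r" "Y \<in> carrier_mat r r" "G \<in> carrier_mat r r"
    using into unit_diag_sym unit_sym_sym by (auto simp: X_def Y_def G_def)
  have h1: "X*X = X" using preserver_unit_diag_idempotent ab by (simp add: X_def)
  have h2: "Y*Y = Y" using preserver_unit_diag_idempotent ab by (simp add: Y_def)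
  have h3: "X*Y = 0\<^sub>m r r" unfolding X_def Y_def by (rule zero_prod[OF unit_diag_sym unit_diag_sym unit_diag_mult_unit_diag]) (use ab in auto)
  have h4: "Y*X = 0\<^sub>m r r" unfolding X_def Y_def by (rule zero_prod[OF unit_diag_sym unit_diag_sym unit_diag_mult_unit_diag]) (use ab in auto)
  have "\<Phi> (real_outer n (\<lambda>i. real_unit_vec a i + real_unit_vec b i)) = X + G + Y"
    unfolding real_outer_unit_vec_add[OF ab(3)] X_def Y_def G_def by (simp add: additive sym_mats_intros)
  hence h5: "(X + G + Y) * (X + G + Y) = 2 \<cdot>\<^sub>m (X + G + Y)"
    using preserver_real_outer_square[of "\<lambda>i. real_unit_vec a i + real_unit_vec b i"] real_unit_vec_add_norm[OF ab] by simp
  have "\<Phi> (real_outer n (\<lambda>i. real_unit_vec a i - real_unit_vec b i)) = X + (-1) \<cdot>\<^sub>m G + Y"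
    unfolding real_outer_unit_vec_diff[OF ab(3)] X_def Y_def G_def by (simp add: additive sym_mats_intros homog)
  hence h6: "(X + (-1) \<cdot>\<^sub>m G + Y) * (X + (-1) \<cdot>\<^sub>m G + Y) = 2 \<cdot>\<^sub>m (X + (-1) \<cdot>\<^sub>m G + Y)"
    using preserver_real_outer_square[of "\<lambda>i. real_unit_vec a i - real_unit_vec b i"] real_unit_vec_diff_norm[OF ab] by simp
  have h7: "(X + 2 \<cdot>\<^sub>m G + 4 \<cdot>\<^sub>m Y) * (4 \<cdot>\<^sub>m X + (-2) \<cdot>\<^sub>m G + Y) = 0\<^sub>m r r"
  proof -
    have "\<Phi> (unit_diag n a + 2 \<cdot>\<^sub>m unit_sym n a b + 4 \<cdot>\<^sub>m unit_diag n b) * \<Phi> (4 \<cdot>\<^sub>m unit_diag n a + (-2) \<cdot>\<^sub>m unit_sym n a b + unit_diag n b) = 0\<^sub>m r r"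
      by (rule zero_prod[OF _ _ unit_pair_zero_product[OF ab]]) (simp_all add: sym_mats_intros)
    thus ?thesis unfolding X_def Y_def G_def by (simp add: additive sym_mats_intros homog)
  qed
  note rel = orthogonal_idempotents_pair_relations[OF c h1 h2 h3 h4 h5 h6 h7]
  show "\<Phi> (unit_sym n a b) * \<Phi> (unit_sym n a b) = \<Phi> (unit_diag n a) + \<Phi> (unit_diag n b)"
    "\<Phi> (unit_diag n a) * \<Phi> (unit_sym n a b) = \<Phi> (unit_sym n a b) * \<Phi> (unit_diag n b)"
    "\<Phi> (unit_diag n b) * \<Phi> (unit_sym n a b) = \<Phi> (unit_sym n a b) * \<Phi> (unit_diag n a)"
    "\<Phi> (unit_diag n a) * \<Phi> (unit_sym n a b) + \<Phi> (unit_diag n b) * \<Phi> (unit_sym n a b) = \<Phi> (unit_sym n a b)"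
    using rel unfolding X_def Y_def G_def by auto
qed

end

locale rank1_idempotent_preserver_pos = rank1_idempotent_preserver +
  assumes n_pos: "0 < n"
begin

lemma preserver_triple_relation:
  assumes abc: "a < n" "b < n" "c < n" "a \<noteq> b" "b \<noteq> c" "a \<noteq> c"
  shows "\<Phi> (unit_diag n a) * \<Phi> (unit_sym n a b) * (\<Phi> (unit_diag n b) * \<Phi> (unit_sym n b c)) = \<Phi> (unit_diag n a) * \<Phi> (unit_sym n a c)"
proof -
  define Pa where "Pa = \<Phi> (unit_diag n a)"
  define Pb where "Pb = \<Phi> (unit_diag n b)"
  define Pc where "Pc = \<Phi> (unit_diag n c)"
  define Gab where "Gab = \<Phi> (unit_sym n a b)"
  define Gbc where "Gbc = \<Phi> (unit_sym n b c)"
  define Gac where "Gac = \<Phi> (unit_sym n a c)"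
  note defs = Pa_def Pb_def Pc_def Gab_def Gbc_def Gac_def
  have c: "Pa \<in> carrier_mat r r" "Pb \<in> carrier_mat r r" "Pc \<in> carrier_mat r r"
    "Gab \<in> carrier_mat r r" "Gbc \<in> carrier_mat r r" "Gac \<in> carrier_mat r r"
    using into unit_diag_sym unit_sym_sym by (auto simp: defs)
  have p1: "Pa*Pa = Pa" "Pb*Pb = Pb" "Pc*Pc = Pc" using preserver_unit_diag_idempotent abc by (auto simp: defs)
  have zp: "\<Phi> (unit_diag n x) * \<Phi> (unit_diag n y) = 0\<^sub>m r r" if "x \<noteq> y" for x y
    by (rule zero_prod[OF unit_diag_sym unit_diag_sym unit_diag_mult_unit_diag[OF that]])
  have p2: "Pa*Pb = 0\<^sub>m r r" "Pb*Pa = 0\<^sub>m r r" "Pa*Pc = 0\<^sub>m r r" "Pc*Pa = 0\<^sub>m r r" "Pb*Pc = 0\<^sub>m r r" "Pc*Pb = 0\<^sub>m r r"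
    using zp abc by (auto simp: defs)
  note pab = preserver_pair_relations[OF abc(1,2,4)] and pbc = preserver_pair_relations[OF abc(2,3,5)] and pac = preserver_pair_relations[OF abc(1,3,6)]
  have g1: "Pa*Gab = Gab*Pb" "Pb*Gab = Gab*Pa" "Pb*Gbc = Gbc*Pc" "Pc*Gbc = Gbc*Pb" "Pa*Gac = Gac*Pc" "Pc*Gac = Gac*Pa"
    using pab pbc pac by (auto simp: defs)
  have z2: "\<Phi> (unit_diag n z) * \<Phi> (unit_sym n x y) = 0\<^sub>m r r" "\<Phi> (unit_sym n x y) * \<Phi> (unit_diag n z) = 0\<^sub>m r r"
    if "z \<noteq> x" "z \<noteq> y" for x y z
    using zero_prod[OF unit_diag_sym unit_sym_sym unit_diag_mult_unit_sym[OF that]] zero_prod[OF unit_sym_sym unit_diag_sym unit_sym_mult_unit_diag[OF that]] by auto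
  have g0: "Pc*Gab = 0\<^sub>m r r" "Gab*Pc = 0\<^sub>m r r" "Pa*Gbc = 0\<^sub>m r r" "Gbc*Pa = 0\<^sub>m r r" "Pb*Gac = 0\<^sub>m r r" "Gac*Pb = 0\<^sub>m r r"
    using z2 abc by (auto simp: defs)
  have "\<Phi> (real_outer n (\<lambda>i. real_unit_vec a i + real_unit_vec b i + real_unit_vec c i)) = Pa + Pb + Pc + Gab + Gbc + Gac"
    unfolding real_outer_unit_vec_add3[OF abc(4,5,6)] defs by (simp add: additive sym_mats_intros)
  hence h: "(Pa + Pb + Pc + Gab + Gbc + Gac) * (Pa + Pb + Pc + Gab + Gbc + Gac) = 3 \<cdot>\<^sub>m (Pa + Pb + Pc + Gab + Gbc + Gac)"
    using preserver_real_outer_square[of "\<lambda>i. real_unit_vec a i + real_unit_vec b i + real_unit_vec c i"] real_unit_vec_add3_norm[OF abc] by simp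
  show ?thesis using idempotents_triple_relation[OF c p1 p2 g1 g0 h] by (simp add: defs)
qed

lemma preserver_unit_generators: "unit_generators n r (\<lambda>a. \<Phi> (unit_diag n a)) (\<lambda>a b. \<Phi> (unit_sym n a b))"
proof
  show "0 < n" by (rule n_pos)
  show "\<And>a. \<Phi> (unit_diag n a) \<in> carrier_mat r r" using into unit_diag_sym by auto
  show "\<And>a b. \<Phi> (unit_sym n a b) \<in> carrier_mat r r" using into unit_sym_sym by auto
  show "\<And>a b. \<Phi> (unit_sym n a b) = \<Phi> (unit_sym n b a)" using unit_sym_commute by metis
  show "\<And>a. a < n \<Longrightarrow> \<Phi> (unit_diag n a) * \<Phi> (unit_diag n a) = \<Phi> (unit_diag n a)" by (rule preserver_unit_diag_idempotent)
  show "\<And>a b. a \<noteq> b \<Longrightarrow> \<Phi> (unit_diag n a) * \<Phi> (unit_diag n b) = 0\<^sub>m r r"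
    by (rule zero_prod[OF unit_diag_sym unit_diag_sym unit_diag_mult_unit_diag])
  show "\<And>a b. a < n \<Longrightarrow> b < n \<Longrightarrow> a \<noteq> b \<Longrightarrow> \<Phi> (unit_sym n a b) * \<Phi> (unit_sym n a b) = \<Phi> (unit_diag n a) + \<Phi> (unit_diag n b)"
    using preserver_pair_relations by blast
  show "\<And>a b. a < n \<Longrightarrow> b < n \<Longrightarrow> a \<noteq> b \<Longrightarrow> \<Phi> (unit_diag n a) * \<Phi> (unit_sym n a b) = \<Phi> (unit_sym n a b) * \<Phi> (unit_diag n b)"
    using preserver_pair_relations by blast
  show "\<And>a b. a < n \<Longrightarrow> b < n \<Longrightarrow> a \<noteq> b \<Longrightarrow> \<Phi> (unit_diag n a) * \<Phi> (unit_sym n a b) + \<Phi> (unit_diag n b) * \<Phi> (unit_sym n a b) = \<Phi> (unit_sym n a b)"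
    using preserver_pair_relations by blast
  show "\<And>a b c. a < n \<Longrightarrow> b < n \<Longrightarrow> c < n \<Longrightarrow> a \<noteq> b \<Longrightarrow> b \<noteq> c \<Longrightarrow> a \<noteq> c \<Longrightarrow>
     \<Phi> (unit_diag n a) * \<Phi> (unit_sym n a b) * (\<Phi> (unit_diag n b) * \<Phi> (unit_sym n b c)) = \<Phi> (unit_diag n a) * \<Phi> (unit_sym n a c)"
    by (rule preserver_triple_relation)
qed

sublocale gen: unit_generators n r "\<lambda>a. \<Phi> (unit_diag n a)" "\<lambda>a b. \<Phi> (unit_sym n a b)" by (rule preserver_unit_generators)
sublocale units: matrix_units n r gen.T by (rule gen.T_matrix_units)

lemma expand_unit_diag: assumes a: "a < n" shows "units.expand (unit_diag n a) = \<Phi> (unit_diag n a)"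
proof (rule eq_matI)
  fix i j assume "i < dim_row (\<Phi> (unit_diag n a))" "j < dim_col (\<Phi> (unit_diag n a))"
  hence ij: "i < r" "j < r" using into[OF unit_diag_sym] by (metis carrier_matD(1,2))+
  have "(\<Sum>a'<n. \<Sum>b<n. unit_diag n a $$ (a',b) * gen.T a' b $$ (i,j)) = (\<Sum>a'\<in>{a}. \<Sum>b\<in>{a}. unit_diag n a $$ (a',b) * gen.T a' b $$ (i,j))"
    using a by (subst sum_lessThan_support[of "{a}"], auto simp: unit_diag_def intro!: sum.neutral, subst sum_lessThan_support[of "{a}"], auto simp: unit_diag_def)
  also have "\<dots> = gen.T a a $$ (i,j)" using a by (simp add: unit_diag_def)
  finally show "units.expand (unit_diag n a) $$ (i,j) = \<Phi> (unit_diag n a) $$ (i,j)" using ij by (simp add: units.index_expand gen.T_def)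
qed (simp_all add: units.expand_def carrier_matD[OF into[OF unit_diag_sym]])

lemma expand_unit_sym: assumes ab: "a < n" "b < n" "a \<noteq> b" shows "units.expand (unit_sym n a b) = \<Phi> (unit_sym n a b)"
proof (rule eq_matI)
  fix i j assume "i < dim_row (\<Phi> (unit_sym n a b))" "j < dim_col (\<Phi> (unit_sym n a b))"
  hence ij: "i < r" "j < r" using into[OF unit_sym_sym] by (metis carrier_matD(1,2))+
  have inner: "(\<Sum>b'<n. unit_sym n a b $$ (a',b') * gen.T a' b' $$ (i,j)) =
      (if a' = a then gen.T a b $$ (i,j) else if a' = b then gen.T b a $$ (i,j) else 0)" if a': "a' < n" for a'
  proof -
    have "(\<Sum>b'<n. unit_sym n a b $$ (a',b') * gen.T a' b' $$ (i,j)) = (\<Sum>b'\<in>{a,b}. unit_sym n a b $$ (a',b') * gen.T a' b' $$ (i,j))"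
      using ab a' by (intro sum_lessThan_support) (auto simp: unit_sym_def)
    thus ?thesis using ab a' by (auto simp: unit_sym_def)
  qed
  have "(\<Sum>a'<n. \<Sum>b'<n. unit_sym n a b $$ (a',b') * gen.T a' b' $$ (i,j))
     = (\<Sum>a'<n. (if a' = a then gen.T a b $$ (i,j) else if a' = b then gen.T b a $$ (i,j) else 0))"
    by (intro sum.cong refl) (simp add: inner)
  also have "\<dots> = (\<Sum>a'\<in>{a,b}. (if a' = a then gen.T a b $$ (i,j) else if a' = b then gen.T b a $$ (i,j) else 0))"
    using ab by (intro sum_lessThan_support) auto
  also have "\<dots> = gen.T a b $$ (i,j) + gen.T b a $$ (i,j)" using ab by simp
  also have "\<dots> = \<Phi> (unit_sym n a b) $$ (i,j)"
    using gen.G_eq_T_sum[OF ab] gen.T_carrier[of a b] gen.T_carrier[of b a] ab ij by simp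
  finally show "units.expand (unit_sym n a b) $$ (i,j) = \<Phi> (unit_sym n a b) $$ (i,j)" using ij by (simp add: units.index_expand)
qed (simp_all add: units.expand_def carrier_matD[OF into[OF unit_sym_sym]])

lemma preserver_eq_expand: assumes A: "A \<in> sym_mats n" shows "\<Phi> A = units.expand A"
proof -
  have fin: "finite {(a,b). a \<le> b \<and> b < (n::nat)}"
    by (rule finite_subset[of _ "{..<n} \<times> {..<n}"]) auto
  have "\<Phi> (restrict_entries n A D) = units.expand (restrict_entries n A D)" if "D \<subseteq> {(a,b). a \<le> b \<and> b < n}" for D
  proof -
    have "finite D" using finite_subset[OF that fin] .
    thus ?thesis using that
    proof (induction D rule: finite_induct)
      case empty
      thus ?case by (simp add: restrict_entries_empty preserver_zero units.expand_zero)
    next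
      case (insert p D)
      obtain a b where p: "p = (a,b)" by (cases p)
      have ab: "a \<le> b" "b < n" using insert.prems p by auto
      have single: "\<Phi> (restrict_entries n A {p}) = units.expand (restrict_entries n A {p})"
      proof (cases "a = b")
        case True
        thus ?thesis using ab p by (simp add: restrict_entries_diag homog unit_diag_sym units.expand_smult expand_unit_diag)
      next
        case False
        hence ab': "a < b" using ab by simp
        show ?thesis unfolding p restrict_entries_off[OF A ab' ab(2)]
          using ab' ab False by (simp add: homog unit_sym_sym units.expand_smult expand_unit_sym)
      qed
      have "\<Phi> (restrict_entries n A (insert p D)) = \<Phi> (restrict_entries n A D) + \<Phi> (restrict_entries n A {p})"
        unfolding restrict_entries_insert[OF insert.hyps(2)] by (rule additive[OF restrict_entries_sym[OF A] restrict_entries_sym[OF A]])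
      also have "\<dots> = units.expand (restrict_entries n A D) + units.expand (restrict_entries n A {p})"
        using insert.IH insert.prems single by simp
      also have "\<dots> = units.expand (restrict_entries n A (insert p D))"
        unfolding restrict_entries_insert[OF insert.hyps(2)] by (rule units.expand_add[symmetric]) (simp_all add: restrict_entries_def)
      finally show ?case .
    qed
  qed
  from this[of "{(a,b). a \<le> b \<and> b < n}"] show ?thesis using restrict_entries_all[OF A] by simp
qed

lemma block_form_exists_pos:
  "\<exists>k S Sinv. k*n \<le> r \<and> S \<in> carrier_mat r r \<and> Sinv \<in> carrier_mat r r
     \<and> S * Sinv = 1\<^sub>m r \<and> Sinv * S = 1\<^sub>m r \<and> (\<forall>A \<in> sym_mats n. \<Phi> A = Sinv * block_embed r k n A * S)"
proof (rule units.block_similarity_exists)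
  fix k S Sinv assume "k*n \<le> r" "S \<in> carrier_mat r r" "Sinv \<in> carrier_mat r r" "S * Sinv = 1\<^sub>m r"
    "Sinv * S = 1\<^sub>m r" "\<And>A. A \<in> carrier_mat n n \<Longrightarrow> Sinv * block_embed r k n A * S = units.expand A"
  thus ?thesis using preserver_eq_expand sym_mats_carrier by metis
qed

context
  assumes Hsym: "\<forall>A \<in> real_rank1_sym_idems n.
     transpose_mat (\<Phi> (map_mat complex_of_real A)) = \<Phi> (map_mat complex_of_real A)"
begin

lemma preserver_real_outer_transpose:
  assumes N: "(\<Sum>i<n. s i * s i) \<noteq> 0"
  shows "transpose_mat (\<Phi> (real_outer n s)) = \<Phi> (real_outer n s)"
proof -
  define N where "N = complex_of_real (\<Sum>i<n. s i * s i)"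
  have N0: "N \<noteq> 0" unfolding N_def using N of_real_eq_0_iff by blast
  define M where "M = \<Phi> (real_outer n s)"
  have M: "M \<in> carrier_mat r r" using into[OF real_outer_sym] by (simp add: M_def)
  have "transpose_mat (\<Phi> ((1/N) \<cdot>\<^sub>m real_outer n s)) = \<Phi> ((1/N) \<cdot>\<^sub>m real_outer n s)"
  proof -
    define R where "R = mat n n (\<lambda>(i,j). s i * s j / (\<Sum>i<n. s i * s i))"
    have "transpose_mat (\<Phi> (map_mat complex_of_real R)) = \<Phi> (map_mat complex_of_real R)"
      using Hsym normalized_outer_rank1_sym_idem[OF N] unfolding R_def by blast
    moreover have "map_mat complex_of_real R = (1/N) \<cdot>\<^sub>m real_outer n s"
      unfolding R_def N_def by (rule of_real_normalized_outer[OF N])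
    ultimately show ?thesis by simp
  qed
  hence e: "transpose_mat ((1/N) \<cdot>\<^sub>m M) = (1/N) \<cdot>\<^sub>m M" using homog[OF real_outer_sym] by (simp add: M_def)
  show ?thesis unfolding M_def[symmetric]
  proof (rule eq_matI)
    fix i j assume "i < dim_row M" "j < dim_col M"
    hence ij: "i < r" "j < r" using M by auto
    have "(1/N) * M $$ (j,i) = (1/N) * M $$ (i,j)"
      using arg_cong[OF e, of "\<lambda>A. A$$(i,j)"] ij M by simp
    thus "transpose_mat M $$ (i,j) = M $$ (i,j)" using N0 ij M by simp
  qed (use M in auto)
qed

lemma preserver_unit_diag_transpose: "a < n \<Longrightarrow> transpose_mat (\<Phi> (unit_diag n a)) = \<Phi> (unit_diag n a)"
  using preserver_real_outer_transpose[of "real_unit_vec a"] real_unit_vec_norm[of a] real_outer_unit_vec[of n a] by simp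

lemma preserver_unit_sym_transpose: assumes ab: "a < n" "b < n" "a \<noteq> b" shows "transpose_mat (\<Phi> (unit_sym n a b)) = \<Phi> (unit_sym n a b)"
proof -
  define X where "X = \<Phi> (unit_diag n a)"
  define Y where "Y = \<Phi> (unit_diag n b)"
  define G where "G = \<Phi> (unit_sym n a b)"
  have c: "X \<in> carrier_mat r r" "Y \<in> carrier_mat r r" "G \<in> carrier_mat r r"
    using into unit_diag_sym unit_sym_sym by (auto simp: X_def Y_def G_def)
  have "\<Phi> (real_outer n (\<lambda>i. real_unit_vec a i + real_unit_vec b i)) = X + G + Y"
    unfolding real_outer_unit_vec_add[OF ab(3)] X_def Y_def G_def by (simp add: additive sym_mats_intros)
  hence e: "transpose_mat (X + G + Y) = X + G + Y" using preserver_real_outer_transpose[of "\<lambda>i. real_unit_vec a i + real_unit_vec b i"] real_unit_vec_add_norm[OF ab] by simp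
  have tx: "transpose_mat X = X" "transpose_mat Y = Y" using preserver_unit_diag_transpose ab by (auto simp: X_def Y_def)
  show ?thesis unfolding G_def[symmetric]
  proof (rule eq_matI)
    fix i j assume "i < dim_row G" "j < dim_col G"
    hence ij: "i < r" "j < r" using c by auto
    have "X$$(j,i) + G$$(j,i) + Y$$(j,i) = X$$(i,j) + G$$(i,j) + Y$$(i,j)"
      using arg_cong[OF e, of "\<lambda>A. A$$(i,j)"] ij c by (simp add: add.assoc)
    moreover have "X$$(j,i) = X$$(i,j)" "Y$$(j,i) = Y$$(i,j)"
      using arg_cong[OF tx(1), of "\<lambda>A. A$$(i,j)"] arg_cong[OF tx(2), of "\<lambda>A. A$$(i,j)"] ij c by auto
    ultimately show "transpose_mat G $$ (i,j) = G $$ (i,j)" using ij c by simp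
  qed (use c in auto)
qed

lemma units_transpose: assumes ab: "a < n" "b < n" shows "transpose_mat (gen.T a b) = gen.T b a"
proof (cases "a = b")
  case True thus ?thesis using preserver_unit_diag_transpose ab by (simp add: gen.T_def)
next
  case False
  have "transpose_mat (\<Phi> (unit_diag n a) * \<Phi> (unit_sym n a b)) = transpose_mat (\<Phi> (unit_sym n a b)) * transpose_mat (\<Phi> (unit_diag n a))"
    by (rule transpose_mult[of _ r r _ r]) (use into unit_diag_sym unit_sym_sym in auto)
  also have "\<dots> = \<Phi> (unit_sym n a b) * \<Phi> (unit_diag n a)" using preserver_unit_diag_transpose preserver_unit_sym_transpose ab False by simp
  also have "\<dots> = \<Phi> (unit_diag n b) * \<Phi> (unit_sym n b a)" using preserver_pair_relations(3)[OF ab False] unit_sym_commute[of n a b] by simp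
  finally show ?thesis using False by (simp add: gen.T_def)
qed

lemma orthogonal_block_form_exists_pos:
  "\<exists>k S. k*n \<le> r \<and> S \<in> carrier_mat r r \<and> S * transpose_mat S = 1\<^sub>m r \<and> transpose_mat S * S = 1\<^sub>m r
     \<and> (\<forall>A \<in> sym_mats n. \<Phi> A = transpose_mat S * block_embed r k n A * S)"
proof (rule units.block_similarity_orthogonal_exists[OF units_transpose])
  fix k S assume "k*n \<le> r" "S \<in> carrier_mat r r" "S * transpose_mat S = 1\<^sub>m r" "transpose_mat S * S = 1\<^sub>m r"
    "\<And>A. A \<in> carrier_mat n n \<Longrightarrow> transpose_mat S * block_embed r k n A * S = units.expand A"
  thus ?thesis using preserver_eq_expand sym_mats_carrier by metis
qed

end

end

lemma similarity_block_embed_idempotent: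
  fixes \<Phi> :: "complex mat \<Rightarrow> complex mat"
  assumes "k*n \<le> r" "S \<in> carrier_mat r r" "Sinv \<in> carrier_mat r r" "S * Sinv = 1\<^sub>m r"
    and \<Phi>: "\<forall>A \<in> sym_mats n. \<Phi> A = Sinv * block_embed r k n A * S"
    and C: "C \<in> sym_mats n" "C * C = C"
  shows "\<Phi> C * \<Phi> C = \<Phi> C"
proof -
  have "\<Phi> C * \<Phi> C = Sinv * (block_embed r k n C * block_embed r k n C) * S"
    using \<Phi> C(1) assms(2-4) by (simp add: similarity_mult)
  also have "\<dots> = \<Phi> C"
    using block_embed_mult[OF sym_mats_carrier[OF C(1)] sym_mats_carrier[OF C(1)] assms(1)] C \<Phi> by simp
  finally show ?thesis .
qed

lemma block_form_imp_rank1_idempotent: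
  fixes \<Phi> :: "complex mat \<Rightarrow> complex mat"
  assumes "\<exists>k S Sinv. k*n \<le> r \<and> S \<in> carrier_mat r r \<and> Sinv \<in> carrier_mat r r
     \<and> S * Sinv = 1\<^sub>m r \<and> Sinv * S = 1\<^sub>m r \<and> (\<forall>A \<in> sym_mats n. \<Phi> A = Sinv * block_embed r k n A * S)"
  shows "\<forall>A \<in> real_rank1_sym_idems n.
     \<Phi> (map_mat complex_of_real A) * \<Phi> (map_mat complex_of_real A) = \<Phi> (map_mat complex_of_real A)"
  using assms similarity_block_embed_idempotent of_real_rank1_sym_idem by metis

lemma orthogonal_block_form_imp_rank1_symmetric_idempotent:
  fixes \<Phi> :: "complex mat \<Rightarrow> complex mat"
  assumes "\<exists>k S. k*n \<le> r \<and> S \<in> carrier_mat r r \<and> S * transpose_mat S = 1\<^sub>m r \<and> transpose_mat S * S = 1\<^sub>m r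
     \<and> (\<forall>A \<in> sym_mats n. \<Phi> A = transpose_mat S * block_embed r k n A * S)"
  shows "\<forall>A \<in> real_rank1_sym_idems n.
     \<Phi> (map_mat complex_of_real A) * \<Phi> (map_mat complex_of_real A) = \<Phi> (map_mat complex_of_real A)
     \<and> transpose_mat (\<Phi> (map_mat complex_of_real A)) = \<Phi> (map_mat complex_of_real A)"
proof
  obtain k S where kn: "k*n \<le> r" and S: "S \<in> carrier_mat r r" "S * transpose_mat S = 1\<^sub>m r"
    and \<Phi>: "\<forall>A \<in> sym_mats n. \<Phi> A = transpose_mat S * block_embed r k n A * S"
    using assms by blast
  fix A assume "A \<in> real_rank1_sym_idems n"
  then have C: "map_mat complex_of_real A \<in> sym_mats n"
    "map_mat complex_of_real A * map_mat complex_of_real A = map_mat complex_of_real A"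
    by (rule of_real_rank1_sym_idem)+
  have "transpose_mat (\<Phi> (map_mat complex_of_real A)) = \<Phi> (map_mat complex_of_real A)"
    using \<Phi> S(1) C(1) block_embed_transpose[OF sym_mats_carrier[OF C(1)]]
    by (simp add: congruence_transpose sym_mats_def)
  thus "\<Phi> (map_mat complex_of_real A) * \<Phi> (map_mat complex_of_real A) = \<Phi> (map_mat complex_of_real A)
     \<and> transpose_mat (\<Phi> (map_mat complex_of_real A)) = \<Phi> (map_mat complex_of_real A)"
    using similarity_block_embed_idempotent[OF kn S(1) transpose_carrier_mat[THEN iffD2, OF S(1)] S(2) \<Phi> C]
    by blast
qed

context rank1_idempotent_preserver
begin

lemma block_form_exists:
  "\<exists>k S Sinv. k*n \<le> r \<and> S \<in> carrier_mat r r \<and> Sinv \<in> carrier_mat r r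
     \<and> S * Sinv = 1\<^sub>m r \<and> Sinv * S = 1\<^sub>m r \<and> (\<forall>A \<in> sym_mats n. \<Phi> A = Sinv * block_embed r k n A * S)"
proof (cases "n = 0")
  case True
  thus ?thesis using preserver_zero sym_mats_zero_dim block_embed_zero_dim by (intro exI[of _ 0] exI[of _ "1\<^sub>m r"]) auto
next
  case False
  interpret rank1_idempotent_preserver_pos n r \<Phi> by unfold_locales (use False in simp)
  show ?thesis by (rule block_form_exists_pos)
qed

lemma orthogonal_block_form_exists:
  assumes "\<forall>A \<in> real_rank1_sym_idems n.
     transpose_mat (\<Phi> (map_mat complex_of_real A)) = \<Phi> (map_mat complex_of_real A)"
  shows "\<exists>k S. k*n \<le> r \<and> S \<in> carrier_mat r r \<and> S * transpose_mat S = 1\<^sub>m r \<and> transpose_mat S * S = 1\<^sub>m r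
     \<and> (\<forall>A \<in> sym_mats n. \<Phi> A = transpose_mat S * block_embed r k n A * S)"
proof (cases "n = 0")
  case True
  thus ?thesis using preserver_zero sym_mats_zero_dim block_embed_zero_dim by (intro exI[of _ 0] exI[of _ "1\<^sub>m r"]) auto
next
  case False
  interpret rank1_idempotent_preserver_pos n r \<Phi> by unfold_locales (use False in simp)
  show ?thesis by (rule orthogonal_block_form_exists_pos[OF assms])
qed

end

context zero_product_preserver
begin

theorem rank1_idempotent_iff_block_form:
  "(\<forall>A \<in> real_rank1_sym_idems n.
     \<Phi> (map_mat complex_of_real A) * \<Phi> (map_mat complex_of_real A) = \<Phi> (map_mat complex_of_real A))
   \<longleftrightarrow> (\<exists>k S Sinv. k*n \<le> r \<and> S \<in> carrier_mat r r \<and> Sinv \<in> carrier_mat r r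
     \<and> S * Sinv = 1\<^sub>m r \<and> Sinv * S = 1\<^sub>m r \<and> (\<forall>A \<in> sym_mats n. \<Phi> A = Sinv * block_embed r k n A * S))"
proof
  assume "\<forall>A \<in> real_rank1_sym_idems n.
     \<Phi> (map_mat complex_of_real A) * \<Phi> (map_mat complex_of_real A) = \<Phi> (map_mat complex_of_real A)"
  then interpret rank1_idempotent_preserver n r \<Phi> by unfold_locales
  show "\<exists>k S Sinv. k*n \<le> r \<and> S \<in> carrier_mat r r \<and> Sinv \<in> carrier_mat r r
     \<and> S * Sinv = 1\<^sub>m r \<and> Sinv * S = 1\<^sub>m r \<and> (\<forall>A \<in> sym_mats n. \<Phi> A = Sinv * block_embed r k n A * S)"
    by (rule block_form_exists)
qed (rule block_form_imp_rank1_idempotent)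

theorem rank1_symmetric_idempotent_iff_orthogonal_block_form:
  "(\<forall>A \<in> real_rank1_sym_idems n.
     \<Phi> (map_mat complex_of_real A) * \<Phi> (map_mat complex_of_real A) = \<Phi> (map_mat complex_of_real A)
     \<and> transpose_mat (\<Phi> (map_mat complex_of_real A)) = \<Phi> (map_mat complex_of_real A))
   \<longleftrightarrow> (\<exists>k S. k*n \<le> r \<and> S \<in> carrier_mat r r \<and> S * transpose_mat S = 1\<^sub>m r \<and> transpose_mat S * S = 1\<^sub>m r
     \<and> (\<forall>A \<in> sym_mats n. \<Phi> A = transpose_mat S * block_embed r k n A * S))"
proof
  assume H: "\<forall>A \<in> real_rank1_sym_idems n.
     \<Phi> (map_mat complex_of_real A) * \<Phi> (map_mat complex_of_real A) = \<Phi> (map_mat complex_of_real A)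
     \<and> transpose_mat (\<Phi> (map_mat complex_of_real A)) = \<Phi> (map_mat complex_of_real A)"
  then interpret rank1_idempotent_preserver n r \<Phi> by unfold_locales blast
  show "\<exists>k S. k*n \<le> r \<and> S \<in> carrier_mat r r \<and> S * transpose_mat S = 1\<^sub>m r \<and> transpose_mat S * S = 1\<^sub>m r
     \<and> (\<forall>A \<in> sym_mats n. \<Phi> A = transpose_mat S * block_embed r k n A * S)"
    using orthogonal_block_form_exists H by blast
qed (rule orthogonal_block_form_imp_rank1_symmetric_idempotent)

end

theorem theorem4p10:
  fixes n r :: nat and \<Phi> :: "complex mat \<Rightarrow> complex mat"
  assumes into: "\<And>A. A \<in> sym_mats n \<Longrightarrow> \<Phi> A \<in> carrier_mat r r"
    and additive: "\<And>A B. A \<in> sym_mats n \<Longrightarrow> B \<in> sym_mats n \<Longrightarrow> \<Phi> (A + B) = \<Phi> A + \<Phi> B"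
    and homog: "\<And>c A. A \<in> sym_mats n \<Longrightarrow> \<Phi> (c \<cdot>\<^sub>m A) = c \<cdot>\<^sub>m \<Phi> A"
    and zero_prod: "\<And>A B. A \<in> sym_mats n \<Longrightarrow> B \<in> sym_mats n \<Longrightarrow> A * B = 0\<^sub>m n n
                      \<Longrightarrow> \<Phi> A * \<Phi> B = 0\<^sub>m r r"
  shows "((\<forall>A \<in> real_rank1_sym_idems n.
             \<Phi> (map_mat complex_of_real A) * \<Phi> (map_mat complex_of_real A)
               = \<Phi> (map_mat complex_of_real A))
          \<longleftrightarrow>
          (\<exists>k S Sinv. k * n \<le> r \<and> S \<in> carrier_mat r r \<and> Sinv \<in> carrier_mat r r
             \<and> S * Sinv = 1\<^sub>m r \<and> Sinv * S = 1\<^sub>m r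
             \<and> (\<forall>A \<in> sym_mats n. \<Phi> A = Sinv * block_embed r k n A * S)))
       \<and>
         ((\<forall>A \<in> real_rank1_sym_idems n.
             \<Phi> (map_mat complex_of_real A) * \<Phi> (map_mat complex_of_real A)
               = \<Phi> (map_mat complex_of_real A)
             \<and> transpose_mat (\<Phi> (map_mat complex_of_real A)) = \<Phi> (map_mat complex_of_real A))
          \<longleftrightarrow>
          (\<exists>k S. k * n \<le> r \<and> S \<in> carrier_mat r r
             \<and> S * transpose_mat S = 1\<^sub>m r \<and> transpose_mat S * S = 1\<^sub>m r
             \<and> (\<forall>A \<in> sym_mats n. \<Phi> A = transpose_mat S * block_embed r k n A * S)))"
proof -
  interpret zero_product_preserver n r \<Phi>
    using into additive homog zero_prod by unfold_locales
  show ?thesis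
    using rank1_idempotent_iff_block_form rank1_symmetric_idempotent_iff_orthogonal_block_form by blast
qed

end
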